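(* In the standing setting, assume (A1), (A3), (A4) and (A7), and consider the coupled chains. Then there exist $h_0>0$ and $C>0$, independent of $s,h,k$, such that for all $s\in\mathbb N_+$, $h\in(0,h_0)$ and all even $k\ge2$, $$\mathbb E|X^{f,c+}_k-X^{f,c-}_k|^4\le C\frac{h^2}{s^2}.$$
   Context: Standing setting. Let $d,n\in\mathbb N_+$, $\beta\ge0$, and let $a:\mathbb R^d\to\mathbb R^d$, $b:\mathbb R^d\times\mathbb R^n\to\mathbb R^d$ be measurable. $|\cdot|$ is the Euclidean norm (Frobenius norm for matrices), $\nabla$ the Jacobian in $x$, $D^\alpha$ the partial derivative in $x$ for a multi-index $\alpha$. For each $s\in\mathbb N_+$ a law on $\mathbb R^n$ is given; a random variable with this law is a drift variable at level $s$ (generically $U^s$), and $\mathbb E[b(x,U^s)]=a(x)$ for all $x$. All constants below are independent of $s,x,y$. (A1) $|a(x)-a(y)|\le L|x-y|$; $\langle x-y,a(x)-a(y)\rangle\le-K|x-y|^2$ with $K>0$; $a\in C^2$ with $|D^\alpha a|\le C_{a^{(|\alpha|)}}$ for $|\alpha|=1,2$. (A2) $\mathbb E|b(x,U^s)-b(y,U^s)|^2\le\bar L^2|x-y|^2$. (A3) $\mathbb E|b(x,U^s)-a(x)|^2\le\sigma_s^2(1+|x|^2)$ with $\sigma_s^2\le\kappa/s$. (A4) $\mathbb E|b(x,U^s)-a(x)|^4\le\sigma^{(4)}_s(1+|x|^4)$ with $\sigma^{(4)}_s\le\kappa/s^2$. (A5) for every $u$, $x\mapsto b(x,u)$ is $C^2$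 with $|D^\alpha b(x,u)|\le C_{b^{(2)}}$ for $|\alpha|=2$, and $\mathbb E|\nabla b(x,U^s)-\nabla a(x)|^4\le\sigma^{(4)}_s(1+|x|^4)$. (A6) $\mathbb E[D^\alpha b(x,U^s)]=D^\alpha a(x)$ for $|\alpha|\le2$. (A7) $|a(x)|^4\le L_0^{(4)}(1+|x|^4)$. (A8) every drift variable $U^{2s}$ at level $2s$ determines (measurably) two drift variables $U^{2s,1},U^{2s,2}$ at level $s$ with $b(x,U^{2s})=\frac12b(x,U^{2s,1})+\frac12b(x,U^{2s,2})$ for all $x$. Coupled chains. Fix $s\in\mathbb N_+$, $h>0$. Let $(Z_k)_{k\ge1}$ be i.i.d. $N(0,I_d)$, $(U^f_k)_{k\ge0}$ i.i.d. drift variables at level $2s$, and $X_0$ an $\mathbb R^d$-valued random variable with $\mathbb E|X_0|^4<\infty$, all independent; let $U^{f,1}_k,U^{f,2}_k$ be the level-$s$ variables given by (A8). Put $V^f_k=U^f_k$, $V^{c-}_k=U^{f,1}_k$, $V^{c+}_k=U^{f,2}_k$. For $j\in\{f,c-,c+\}$, all chains start at $X_0$: $X^{j,f}_{k+1}=X^{j,f}_k+hb(X^{j,f}_k,V^j_k)+\beta\sqrt hZ_{k+1}$ ($k\ge0$); for even $k\ge0$: $X^{j,c-}_{k+2}=X^{j,c-}_k+2hb(X^{j,c-}_k,V^j_k)+\beta\sqrt h(Z_{k+1}+Z_{k+2})$, $X^{j,c+}_{k+2}=X^{j,c+}_k+2hb(X^{j,c+}_k,V^j_{k+1})+\beta\sqrt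 h(Z_{k+1}+Z_{k+2})$. Exact-drift chains from $X_0$: $X_{k+1}=X_k+ha(X_k)+\beta\sqrt hZ_{k+1}$ and, for even $k$, $X^c_{k+2}=X^c_k+2ha(X^c_k)+\beta\sqrt h(Z_{k+1}+Z_{k+2})$. Averages: $\bar X^{j,c}_k=\frac12(X^{j,c-}_k+X^{j,c+}_k)$, $\bar X^{c,f}_k=\frac12(X^{c-,f}_k+X^{c+,f}_k)$. *)

theory Defs
  imports "HOL-Analysis.Analysis" "HOL-Probability.Probability"
begin

definition std_normal_vec :: "'d::euclidean_space measure" where
  "std_normal_vec = distr (PiM Basis (\<lambda>_. density lborel std_normal_density)) borel
                       (\<lambda>f. \<Sum>b\<in>Basis. f b *\<^sub>R b)"

datatype src = SrcX0 | SrcZ nat | SrcU nat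

text \<open>Mutual independence of X0, (Z_k)_k, (U_k)_k: independence of the generated sigma-algebras
  (this is what indep_vars unfolds to, for variables with different codomains).\<close>
definition inputs_indep ::
  "'a measure \<Rightarrow> ('a \<Rightarrow> 'd::euclidean_space) \<Rightarrow> (nat \<Rightarrow> 'a \<Rightarrow> 'd) \<Rightarrow> (nat \<Rightarrow> 'a \<Rightarrow> 'u::euclidean_space) \<Rightarrow> bool" where
  "inputs_indep M X0 Z U \<longleftrightarrow>
     prob_space.indep_sets M
       (\<lambda>i. case i of
              SrcX0 \<Rightarrow> {X0 -` A \<inter> space M | A. A \<in> sets borel}
            | SrcZ k \<Rightarrow> {Z k -` A \<inter> space M | A. A \<in> sets borel}
            | SrcU k \<Rightarrow> {U k -` A \<inter> space M | A. A \<in> sets borel}) (UNIV - {SrcZ 0})"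

text \<open>Coarse chain (step 2h) driven by the drift variables V, started at X0.
  coarse_chain b beta h X0 Z V off m = X at time k = 2m, where the drift variable used in the
  step from k to k+2 is V (k + off): off = 0 gives the c- chain, off = 1 the c+ chain.\<close>
fun coarse_chain ::
  "('d::euclidean_space \<Rightarrow> 'u \<Rightarrow> 'd) \<Rightarrow> real \<Rightarrow> real \<Rightarrow> ('a \<Rightarrow> 'd) \<Rightarrow> (nat \<Rightarrow> 'a \<Rightarrow> 'd)
     \<Rightarrow> (nat \<Rightarrow> 'a \<Rightarrow> 'u) \<Rightarrow> nat \<Rightarrow> nat \<Rightarrow> 'a \<Rightarrow> 'd" where
  "coarse_chain b \<beta> h X0 Z V off 0 \<omega> = X0 \<omega>"
| "coarse_chain b \<beta> h X0 Z V off (Suc m) \<omega> =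
     (let x = coarse_chain b \<beta> h X0 Z V off m \<omega>
      in x + (2 * h) *\<^sub>R b x (V (2 * m + off) \<omega>)
           + (\<beta> * sqrt h) *\<^sub>R (Z (2 * m + 1) \<omega> + Z (2 * m + 2) \<omega>))"

end

theory Submission
  imports Defs
begin

text \<open>
  The coarse chains \<open>X\<^sup>+ = X\<^sup>f\<^sup>,\<^sup>c\<^sup>+\<close> and \<open>X\<^sup>- = X\<^sup>f\<^sup>,\<^sup>c\<^sup>-\<close> use the same
  Gaussian increments, so these cancel in the difference \<open>D = X\<^sup>+ - X\<^sup>-\<close>: one coarse step
  maps \<open>D\<close> to
  \<open>D + 2h (a(X\<^sup>+) - a(X\<^sup>-)) + 2h (\<xi>\<^sup>+ - \<xi>\<^sup>-)\<close>, where
  \<open>\<xi> = b(x, U) - a(x)\<close> are the centred fluctuations of two fresh drift variables at level \<open>2s\<close>.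
  Dissipativity with a small step gives
  \<open>|D + 2h (a(p) - a(q))|\<^sup>2 \<le> (1 - 2hK) |D|\<^sup>2\<close>. Conditioning on the past, which is
  independent of the fresh inputs, the fluctuations enter the fourth moment only through their
  second and fourth moments, of order \<open>1/s\<close> and \<open>1/s\<^sup>2\<close> times a polynomial in the
  chains. The chains themselves have uniformly bounded fourth moments by the same argument applied
  to a single chain (now with the Gaussian moments \<open>E|Z|\<^sup>2 = d\<close>, \<open>E|Z|\<^sup>4 \<le> 3d\<^sup>2\<close>).
  Hence \<open>E|D\<^sub>m\<^sub>+\<^sub>1|\<^sup>4 \<le> (1 - hK) E|D\<^sub>m|\<^sup>4 + O(h\<^sup>3/s\<^sup>2)\<close>,
  and \<open>E|D\<^sub>m|\<^sup>4 = O(h\<^sup>2/s\<^sup>2)\<close> uniformly in \<open>m\<close>.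
\<close>

section \<open>Independence of the primitive inputs\<close>

definition input_events ::
  "'a measure \<Rightarrow> ('a \<Rightarrow> 'd::euclidean_space) \<Rightarrow> (nat \<Rightarrow> 'a \<Rightarrow> 'd) \<Rightarrow> (nat \<Rightarrow> 'a \<Rightarrow> 'u::euclidean_space)
     \<Rightarrow> src \<Rightarrow> 'a set set" where
  "input_events M X0 Z U i = (case i of
      SrcX0 \<Rightarrow> {X0 -` A \<inter> space M | A. A \<in> sets borel}
    | SrcZ k \<Rightarrow> {Z k -` A \<inter> space M | A. A \<in> sets borel}
    | SrcU k \<Rightarrow> {U k -` A \<inter> space M | A. A \<in> sets borel})"

lemma input_events_simps [simp]:
  "input_events M X0 Z U SrcX0 = {X0 -` A \<inter> space M | A. A \<in> sets borel}"
  "input_events M X0 Z U (SrcZ k) = {Z k -` A \<inter> space M | A. A \<in> sets borel}"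
  "input_events M X0 Z U (SrcU k) = {U k -` A \<inter> space M | A. A \<in> sets borel}"
  by (simp_all add: input_events_def)

lemma inputs_indep_iff:
  "inputs_indep M X0 Z U \<longleftrightarrow> prob_space.indep_sets M (input_events M X0 Z U) (UNIV - {SrcZ 0})"
  unfolding inputs_indep_def input_events_def by simp

lemma Int_stable_vimage_sets: "Int_stable {f -` A \<inter> S | A. A \<in> sets N}"
proof (rule Int_stableI)
  fix C D assume "C \<in> {f -` A \<inter> S | A. A \<in> sets N}" "D \<in> {f -` A \<inter> S | A. A \<in> sets N}"
  then obtain A B where "C = f -` A \<inter> S" "D = f -` B \<inter> S" "A \<in> sets N" "B \<in> sets N" by blast
  then show "C \<inter> D \<in> {f -` A \<inter> S | A. A \<in> sets N}" by (intro CollectI exI[of _ "A \<inter> B"]) auto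
qed

lemma Int_stable_input_events: "Int_stable (input_events M X0 Z U i)"
  by (cases i) (simp_all add: Int_stable_vimage_sets)

definition input_sigma ::
  "'a measure \<Rightarrow> ('a \<Rightarrow> 'd::euclidean_space) \<Rightarrow> (nat \<Rightarrow> 'a \<Rightarrow> 'd) \<Rightarrow> (nat \<Rightarrow> 'a \<Rightarrow> 'u::euclidean_space)
     \<Rightarrow> src set \<Rightarrow> 'a measure" where
  "input_sigma M X0 Z U A = sigma (space M) (\<Union>i\<in>A. input_events M X0 Z U i)"

lemma space_input_sigma [simp]: "space (input_sigma M X0 Z U A) = space M"
  unfolding input_sigma_def by (rule space_measure_of_conv)

lemma sets_input_sigma:
  "sets (input_sigma M X0 Z U A) = sigma_sets (space M) (\<Union>i\<in>A. input_events M X0 Z U i)"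
  unfolding input_sigma_def by (rule sets_measure_of) (auto simp: input_events_def split: src.splits)

lemma measurable_input_sigma_input:
  assumes "i \<in> A" and "input_events M X0 Z U i = {W -` B \<inter> space M | B. B \<in> sets borel}"
  shows "W \<in> measurable (input_sigma M X0 Z U A) borel"
proof (rule measurableI)
  show "W -` B \<inter> space (input_sigma M X0 Z U A) \<in> sets (input_sigma M X0 Z U A)" if "B \<in> sets borel" for B
    using assms that unfolding sets_input_sigma by (auto intro!: sigma_sets.Basic)
qed simp

lemma measurable_input_sigma_inputs:
  shows "SrcX0 \<in> A \<Longrightarrow> X0 \<in> measurable (input_sigma M X0 Z U A) borel"
    and "SrcZ k \<in> A \<Longrightarrow> Z k \<in> measurable (input_sigma M X0 Z U A) borel"
    and "SrcU k \<in> A \<Longrightarrow> U k \<in> measurable (input_sigma M X0 Z U A) borel"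
  by (rule measurable_input_sigma_input, assumption, simp)+

locale chain_inputs = prob_space M
  for M :: "'a measure" and X0 :: "'a \<Rightarrow> 'd::euclidean_space" and Z :: "nat \<Rightarrow> 'a \<Rightarrow> 'd"
    and U :: "nat \<Rightarrow> 'a \<Rightarrow> 'u::euclidean_space" +
  assumes X0_measurable: "X0 \<in> borel_measurable M"
    and Z_measurable: "\<And>k. Z k \<in> borel_measurable M"
    and U_measurable: "\<And>k. U k \<in> borel_measurable M"
    and inputs_indep: "inputs_indep M X0 Z U"
begin

abbreviation "\<F> \<equiv> input_sigma M X0 Z U"

lemma input_events_subset: "input_events M X0 Z U i \<subseteq> events"
  using X0_measurable Z_measurable U_measurable by (auto simp: input_events_def split: src.splits)

lemma measurable_input_sigma_imp_measurable:
  assumes "V \<in> measurable (\<F> A) N"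
  shows "V \<in> measurable M N"
proof (rule measurableI)
  show "x \<in> space M \<Longrightarrow> V x \<in> space N" for x
    using measurable_space[OF assms] by simp
  have "sigma_sets (space M) (\<Union>i\<in>A. input_events M X0 Z U i) \<subseteq> events"
    by (rule sets.sigma_sets_subset) (use input_events_subset in auto)
  then show "V -` B \<inter> space M \<in> events" if "B \<in> sets N" for B
    using measurable_sets[OF assms that] by (auto simp: sets_input_sigma)
qed

text \<open>The input \<open>SrcZ 0\<close> drives no chain and is not covered by \<open>inputs_indep\<close>.\<close>
lemma nn_integral_fresh_input:
  assumes fresh: "i \<notin> A" "i \<noteq> SrcZ 0" "SrcZ 0 \<notin> A"
    and V: "V \<in> measurable (\<F> A) borel"
    and W_events: "input_events M X0 Z U i = {W -` B \<inter> space M | B. B \<in> sets borel}"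
    and W: "W \<in> borel_measurable M"
    and f: "f \<in> borel_measurable (borel \<Otimes>\<^sub>M borel)"
  shows "(\<integral>\<^sup>+\<omega>. f (V \<omega>, W \<omega>) \<partial>M) = (\<integral>\<^sup>+v. (\<integral>\<^sup>+w. f (v, w) \<partial>distr M borel W) \<partial>distr M borel V)"
proof -
  have VM: "V \<in> borel_measurable M" by (rule measurable_input_sigma_imp_measurable[OF V])
  let ?I = "case_bool A {i}"
  have "indep_sets (\<lambda>j. sigma_sets (space M) (\<Union>k\<in>?I j. input_events M X0 Z U k)) UNIV"
  proof (rule indep_sets_collect_sigma)
    show "indep_sets (input_events M X0 Z U) (\<Union>j. ?I j)"
      using inputs_indep unfolding inputs_indep_iff
      by (rule indep_sets_mono_index[rotated]) (use fresh in \<open>auto split: bool.splits\<close>)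
    show "disjoint_family_on ?I UNIV"
      using fresh unfolding disjoint_family_on_def by (auto split: bool.splits)
  qed (rule Int_stable_input_events)
  then have indep_AW: "indep_set (sigma_sets (space M) (\<Union>k\<in>A. input_events M X0 Z U k))
                                  (sigma_sets (space M) (input_events M X0 Z U i))"
    unfolding indep_set_def by (rule indep_sets_mono_sets) (auto split: bool.splits)
  interpret PV: prob_space "distr M borel V" by (rule prob_space_distr[OF VM])
  interpret PW: prob_space "distr M borel W" by (rule prob_space_distr[OF W])
  interpret PP: pair_sigma_finite "distr M borel V" "distr M borel W" ..
  have VW: "(\<lambda>x. (V x, W x)) \<in> measurable M (borel \<Otimes>\<^sub>M borel)"
    using VM W by (rule measurable_Pair)
  have joint_law: "distr M borel V \<Otimes>\<^sub>M distr M borel W = distr M (borel \<Otimes>\<^sub>M borel) (\<lambda>x. (V x, W x))"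
  proof (rule pair_measure_eqI)
    fix C D assume C: "C \<in> sets (distr M borel V)" and D: "D \<in> sets (distr M borel W)"
    have CV: "V -` C \<inter> space M \<in> sigma_sets (space M) (\<Union>k\<in>A. input_events M X0 Z U k)"
      using measurable_sets[OF V, of C] C by (simp add: sets_input_sigma)
    have DW: "W -` D \<inter> space M \<in> sigma_sets (space M) (input_events M X0 Z U i)"
      using D W_events by auto
    have "(\<lambda>x. (V x, W x)) -` (C \<times> D) \<inter> space M = (V -` C \<inter> space M) \<inter> (W -` D \<inter> space M)"
      by auto
    then show "emeasure (distr M borel V) C * emeasure (distr M borel W) D
             = emeasure (distr M (borel \<Otimes>\<^sub>M borel) (\<lambda>x. (V x, W x))) (C \<times> D)"
      using C D VM W VW indep_setD[OF indep_AW CV DW]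
      by (simp add: emeasure_distr emeasure_eq_measure ennreal_mult)
  qed (unfold_locales, simp)
  have "(\<integral>\<^sup>+\<omega>. f (V \<omega>, W \<omega>) \<partial>M) = (\<integral>\<^sup>+x. f x \<partial>distr M (borel \<Otimes>\<^sub>M borel) (\<lambda>x. (V x, W x)))"
    by (subst nn_integral_distr) (use f VW in auto)
  also have "\<dots> = (\<integral>\<^sup>+v. (\<integral>\<^sup>+w. f (v, w) \<partial>distr M borel W) \<partial>distr M borel V)"
    unfolding joint_law[symmetric]
    by (rule PW.nn_integral_fst[symmetric])
       (use f in \<open>simp add: measurable_cong_sets[OF sets_pair_measure_cong[OF sets_distr sets_distr] refl]\<close>)
  finally show ?thesis .
qed

lemma nn_integral_fresh_input_le:
  assumes fresh: "i \<notin> A" "i \<noteq> SrcZ 0" "SrcZ 0 \<notin> A"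
    and V: "V \<in> measurable (\<F> A) borel"
    and W_events: "input_events M X0 Z U i = {W -` B \<inter> space M | B. B \<in> sets borel}"
    and W: "W \<in> borel_measurable M" and law: "distr M borel W = Q"
    and g: "g \<in> borel_measurable (borel \<Otimes>\<^sub>M borel)" and G: "G \<in> borel_measurable borel"
    and bound: "\<And>v. (\<integral>\<^sup>+w. g (v, w) \<partial>Q) \<le> G v"
  shows "(\<integral>\<^sup>+\<omega>. g (V \<omega>, W \<omega>) \<partial>M) \<le> (\<integral>\<^sup>+\<omega>. G (V \<omega>) \<partial>M)"
proof -
  have VM: "V \<in> borel_measurable M" by (rule measurable_input_sigma_imp_measurable[OF V])
  have "(\<integral>\<^sup>+\<omega>. g (V \<omega>, W \<omega>) \<partial>M) = (\<integral>\<^sup>+v. (\<integral>\<^sup>+w. g (v, w) \<partial>Q) \<partial>distr M borel V)"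
    using nn_integral_fresh_input[OF fresh V W_events W g] law by simp
  also have "\<dots> \<le> (\<integral>\<^sup>+v. G v \<partial>distr M borel V)"
    by (rule nn_integral_mono) (rule bound)
  also have "\<dots> = (\<integral>\<^sup>+\<omega>. G (V \<omega>) \<partial>M)"
    using G VM by (simp add: nn_integral_distr)
  finally show ?thesis .
qed

end

section \<open>Moments of the standard Gaussian vector\<close>

abbreviation std_normal_coords :: "('d::euclidean_space \<Rightarrow> real) measure" where
  "std_normal_coords \<equiv> PiM Basis (\<lambda>_. std_normal_distribution)"

lemma prob_space_std_normal_coords: "prob_space std_normal_coords"
  by (intro prob_space_PiM prob_space_normal_density) simp

lemma measurable_coord_std_normal_coords [measurable]:
  "b \<in> Basis \<Longrightarrow> (\<lambda>f. f b) \<in> borel_measurable (std_normal_coords :: ('d::euclidean_space \<Rightarrow> real) measure)"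
  using measurable_component_singleton[of b Basis "\<lambda>_. std_normal_distribution"]
  by (metis measurable_cong_sets sets_density sets_lborel)

lemma measurable_coords_sum:
  "(\<lambda>f. \<Sum>b\<in>Basis. f b *\<^sub>R b) \<in> measurable (std_normal_coords :: ('d::euclidean_space \<Rightarrow> real) measure) borel"
  by (intro borel_measurable_sum borel_measurable_scaleR measurable_coord_std_normal_coords borel_measurable_const)

lemma prob_space_std_normal_vec: "prob_space std_normal_vec"
  unfolding std_normal_vec_def
  by (rule prob_space.prob_space_distr[OF prob_space_std_normal_coords measurable_coords_sum])

lemma sets_std_normal_vec: "sets std_normal_vec = sets borel"
  by (simp add: std_normal_vec_def)

lemma distr_std_normal_coord:
  "(b::'d::euclidean_space) \<in> Basis \<Longrightarrow>
     distr (std_normal_coords :: ('d \<Rightarrow> real) measure) std_normal_distribution (\<lambda>f. f b)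
       = std_normal_distribution"
  by (rule distr_PiM_component) (auto intro: prob_space_normal_density)

lemma nn_integral_std_normal_coord:
  assumes b: "(b::'d::euclidean_space) \<in> Basis" and g: "g \<in> borel_measurable borel"
  shows "(\<integral>\<^sup>+f. g (f b) \<partial>(std_normal_coords :: ('d \<Rightarrow> real) measure))
       = (\<integral>\<^sup>+x. g x \<partial>std_normal_distribution)"
proof -
  have "(\<integral>\<^sup>+x. g x \<partial>std_normal_distribution)
      = (\<integral>\<^sup>+x. g x \<partial>distr (std_normal_coords :: ('d \<Rightarrow> real) measure) std_normal_distribution (\<lambda>f. f b))"
    by (simp add: distr_std_normal_coord[OF b])
  also have "\<dots> = (\<integral>\<^sup>+f. g (f b) \<partial>(std_normal_coords :: ('d \<Rightarrow> real) measure))"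
    by (rule nn_integral_distr) (use b g in auto)
  finally show ?thesis ..
qed

lemma std_normal_coord_mean:
  assumes b: "(b::'d::euclidean_space) \<in> Basis"
  shows "integrable (std_normal_coords :: ('d \<Rightarrow> real) measure) (\<lambda>f. f b)"
    and "(\<integral>f. f b \<partial>(std_normal_coords :: ('d \<Rightarrow> real) measure)) = 0"
proof -
  have m: "(\<lambda>f. f b) \<in> measurable (std_normal_coords :: ('d \<Rightarrow> real) measure) std_normal_distribution"
    by (rule measurable_component_singleton[OF b])
  have id: "(\<lambda>x. x) \<in> borel_measurable std_normal_distribution"
    by (rule measurable_ident_sets) simp
  have "integrable std_normal_distribution (\<lambda>x. x)"
    using integrable_std_normal_distribution_moment[of 1] by simp
  then show "integrable (std_normal_coords :: ('d \<Rightarrow> real) measure) (\<lambda>f. f b)"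
    using integrable_distr_eq[OF m id] by (simp add: distr_std_normal_coord[OF b])
  have "(\<integral>f. f b \<partial>(std_normal_coords :: ('d \<Rightarrow> real) measure))
      = (\<integral>x. x \<partial>distr (std_normal_coords :: ('d \<Rightarrow> real) measure) std_normal_distribution (\<lambda>f. f b))"
    by (rule integral_distr[symmetric, OF m id])
  also have "\<dots> = (\<integral>x. x^1 \<partial>std_normal_distribution)"
    unfolding distr_std_normal_coord[OF b] by simp
  also have "\<dots> = 0" by (rule integral_std_normal_distribution_moment_odd) simp
  finally show "(\<integral>f. f b \<partial>(std_normal_coords :: ('d \<Rightarrow> real) measure)) = 0" .
qed

lemma std_normal_vec_mean:
  shows "integrable (std_normal_vec :: 'd::euclidean_space measure) (\<lambda>z. z)"
    and "(\<integral>z. z \<partial>(std_normal_vec :: 'd measure)) = 0"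
proof -
  have I: "integrable (std_normal_coords :: ('d \<Rightarrow> real) measure) (\<lambda>f. \<Sum>b\<in>Basis. f b *\<^sub>R b)"
    by (rule Bochner_Integration.integrable_sum, rule integrable_scaleR_left, rule std_normal_coord_mean)
  show "integrable (std_normal_vec :: 'd measure) (\<lambda>z. z)"
    unfolding std_normal_vec_def
    by (subst integrable_distr_eq[OF measurable_coords_sum measurable_ident_sets[OF refl]]) (rule I)
  have "(\<integral>z. z \<partial>(std_normal_vec :: 'd measure))
      = (\<integral>f. (\<Sum>b\<in>Basis. f b *\<^sub>R b) \<partial>(std_normal_coords :: ('d \<Rightarrow> real) measure))"
    unfolding std_normal_vec_def by (rule integral_distr[OF measurable_coords_sum measurable_ident_sets[OF refl]])
  also have "\<dots> = (\<Sum>b\<in>Basis. (\<integral>f. f b *\<^sub>R b \<partial>(std_normal_coords :: ('d \<Rightarrow> real) measure)))"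
    by (rule Bochner_Integration.integral_sum) (rule integrable_scaleR_left, rule std_normal_coord_mean)
  also have "\<dots> = (\<Sum>b\<in>Basis. (\<integral>f. f b \<partial>(std_normal_coords :: ('d \<Rightarrow> real) measure)) *\<^sub>R (b::'d))"
    by (rule sum.cong[OF refl]) (rule integral_scaleR_left, rule std_normal_coord_mean)
  also have "\<dots> = 0" by (simp add: std_normal_coord_mean)
  finally show "(\<integral>z. z \<partial>(std_normal_vec :: 'd measure)) = 0" .
qed

lemma nn_integral_std_normal_even_moment:
  "(\<integral>\<^sup>+x. ennreal (x ^ (2 * k)) \<partial>std_normal_distribution) = ennreal (fact (2 * k) / (2 ^ k * fact k))"
proof -
  have "(\<integral>\<^sup>+x. ennreal (x ^ (2 * k)) \<partial>std_normal_distribution)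
      = ennreal (\<integral>x. x ^ (2 * k) \<partial>std_normal_distribution)"
    by (rule nn_integral_eq_integral) (use std_normal_distribution_even_moments(2)[of k] in auto)
  then show ?thesis by (simp add: std_normal_distribution_even_moments(1))
qed

lemma power2_norm_coords_sum:
  "(norm (\<Sum>b\<in>Basis. f b *\<^sub>R b :: 'd::euclidean_space))^2 = (\<Sum>b\<in>Basis. (f b)^2)"
  unfolding power2_norm_eq_inner by (subst euclidean_inner) (simp add: power2_eq_square)

lemma nn_integral_std_normal_vec_norm2:
  "(\<integral>\<^sup>+z. ennreal ((norm z)^2) \<partial>(std_normal_vec :: 'd::euclidean_space measure)) = ennreal DIM('d)"
proof -
  have "(\<integral>\<^sup>+z. ennreal ((norm z)^2) \<partial>(std_normal_vec :: 'd measure))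
      = (\<integral>\<^sup>+f. ennreal ((norm (\<Sum>b\<in>Basis. f b *\<^sub>R b :: 'd))^2) \<partial>(std_normal_coords :: ('d \<Rightarrow> real) measure))"
    unfolding std_normal_vec_def by (rule nn_integral_distr) (use measurable_coords_sum in simp_all)
  also have "\<dots> = (\<integral>\<^sup>+f. (\<Sum>b\<in>(Basis::'d set). ennreal ((f b)^2)) \<partial>(std_normal_coords :: ('d \<Rightarrow> real) measure))"
    by (simp add: power2_norm_coords_sum)
  also have "\<dots> = (\<Sum>b\<in>(Basis::'d set). (\<integral>\<^sup>+f. ennreal ((f b)^2) \<partial>(std_normal_coords :: ('d \<Rightarrow> real) measure)))"
    by (rule nn_integral_sum) auto
  also have "\<dots> = (\<Sum>b\<in>(Basis::'d set). 1)"
    using nn_integral_std_normal_even_moment[of 1]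
    by (intro sum.cong) (auto simp: nn_integral_std_normal_coord[of _ "\<lambda>x. ennreal (x^2)"])
  finally show ?thesis by (simp add: ennreal_of_nat_eq_real_of_nat)
qed

lemma nn_integral_std_normal_vec_norm4:
  "(\<integral>\<^sup>+z. ennreal ((norm z)^4) \<partial>(std_normal_vec :: 'd::euclidean_space measure))
     \<le> ennreal (3 * (real DIM('d))^2)"
proof -
  have "(\<integral>\<^sup>+z. ennreal ((norm z)^4) \<partial>(std_normal_vec :: 'd measure))
      = (\<integral>\<^sup>+f. ennreal ((norm (\<Sum>b\<in>Basis. f b *\<^sub>R b :: 'd))^4) \<partial>(std_normal_coords :: ('d \<Rightarrow> real) measure))"
    unfolding std_normal_vec_def by (rule nn_integral_distr) (use measurable_coords_sum in simp_all)
  also have "\<dots> \<le> (\<integral>\<^sup>+f. ennreal (real DIM('d)) * (\<Sum>b\<in>(Basis::'d set). ennreal ((f b)^4))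
                    \<partial>(std_normal_coords :: ('d \<Rightarrow> real) measure))"
  proof (rule nn_integral_mono)
    fix f :: "'d \<Rightarrow> real"
    have "(norm (\<Sum>b\<in>Basis. f b *\<^sub>R b :: 'd))^4 = (\<Sum>b\<in>(Basis::'d set). (f b)^2)^2"
      by (subst power2_norm_coords_sum[symmetric]) simp
    also have "\<dots> \<le> real DIM('d) * (\<Sum>b\<in>(Basis::'d set). ((f b)^2)^2)"
      using Cauchy_Schwarz_ineq_sum[of "\<lambda>b. (f b)^2" "\<lambda>_. 1" "Basis::'d set"] by (simp add: mult.commute)
    finally show "ennreal ((norm (\<Sum>b\<in>Basis. f b *\<^sub>R b :: 'd))^4)
                \<le> ennreal (real DIM('d)) * (\<Sum>b\<in>(Basis::'d set). ennreal ((f b)^4))"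
      by (simp add: ennreal_mult[symmetric] sum_nonneg)
  qed
  also have "\<dots> = ennreal (real DIM('d))
      * (\<Sum>b\<in>(Basis::'d set). (\<integral>\<^sup>+f. ennreal ((f b)^4) \<partial>(std_normal_coords :: ('d \<Rightarrow> real) measure)))"
    by (subst nn_integral_cmult, measurable, subst nn_integral_sum, auto)
  also have "\<dots> = ennreal (real DIM('d)) * (\<Sum>b\<in>(Basis::'d set). 3)"
    using nn_integral_std_normal_even_moment[of 2]
    by (intro arg_cong2[where f="(*)"] refl sum.cong)
       (auto simp: nn_integral_std_normal_coord[of _ "\<lambda>x. ennreal (x^4)"] fact_numeral)
  also have "\<dots> = ennreal (3 * (real DIM('d))^2)"
    by (simp add: ennreal_of_nat_eq_real_of_nat ennreal_mult ennreal_power power2_eq_square mult_ac)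
  finally show ?thesis .
qed

section \<open>Moments of centred perturbations\<close>

lemma norm_add_power4_le:
  fixes y v :: "'d::real_inner"
  shows "(norm (y + v))^4
     \<le> (norm y)^4 + 4 * (norm y)^2 * inner y v + 8 * (norm y)^2 * (norm v)^2 + 3 * (norm v)^4"
proof -
  define a c p where "a = (norm y)^2" and "c = (norm v)^2" and "p = inner y v"
  have sum_sq: "(norm (y + v))^2 = a + 2 * p + c"
    by (simp add: a_def c_def p_def power2_norm_eq_inner inner_add_left inner_add_right inner_commute)
  have "0 \<le> (norm (y - v))^2" by simp
  then have p_le: "2 * p \<le> a + c"
    by (simp add: a_def c_def p_def power2_norm_eq_inner inner_diff_left inner_diff_right inner_commute)
  have "\<bar>p\<bar> \<le> norm y * norm v" unfolding p_def by (rule Cauchy_Schwarz_ineq2)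
  then have "p^2 \<le> a * c"
    unfolding a_def c_def
    by (metis abs_ge_zero abs_le_square_iff abs_mult abs_norm_cancel power2_abs power_mult_distrib)
  then have "4 * p^2 \<le> 4 * a * c" by simp
  moreover have "4 * p * c \<le> 2 * a * c + 2 * c^2"
    using mult_right_mono[OF p_le, of c] by (simp add: c_def power2_eq_square algebra_simps)
  moreover have "(norm (y + v))^4 = a^2 + 4 * p^2 + c^2 + 4 * a * p + 2 * a * c + 4 * p * c"
  proof -
    have "(norm (y + v))^4 = ((norm (y + v))^2)^2" by simp
    also have "\<dots> = (a + 2 * p + c)^2" by (simp only: sum_sq)
    finally show ?thesis by (simp add: power2_eq_square algebra_simps)
  qed
  moreover have "(norm y)^4 + 4 * (norm y)^2 * inner y v + 8 * (norm y)^2 * (norm v)^2 + 3 * (norm v)^4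
      = a^2 + 4 * a * p + 8 * a * c + 3 * c^2"
    by (simp add: a_def c_def p_def flip: power_mult)
  ultimately show ?thesis by linarith
qed

lemma integral_le_of_nn_integral_le:
  fixes g :: "'u \<Rightarrow> real"
  assumes "integrable P g" "\<And>u. 0 \<le> g u" "(\<integral>\<^sup>+u. ennreal (g u) \<partial>P) \<le> ennreal q" "0 \<le> q"
  shows "(\<integral>u. g u \<partial>P) \<le> q"
proof -
  have "ennreal (\<integral>u. g u \<partial>P) = (\<integral>\<^sup>+u. ennreal (g u) \<partial>P)"
    by (rule nn_integral_eq_integral[symmetric]) (use assms in auto)
  then have "ennreal (\<integral>u. g u \<partial>P) \<le> ennreal q" using assms(3) by simp
  then show ?thesis by (simp add: ennreal_le_iff[OF assms(4)])
qed

lemma nn_integral_centered_perturbation: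
  fixes B :: "'u \<Rightarrow> 'd::euclidean_space" and y :: 'd and t :: real
  assumes P: "prob_space P" and B_meas: "B \<in> borel_measurable P" and B_int: "integrable P B"
    and B_mean: "(\<integral>u. B u \<partial>P) = 0"
    and B2: "(\<integral>\<^sup>+u. ennreal ((norm (B u))^2) \<partial>P) \<le> ennreal q2"
    and B4: "(\<integral>\<^sup>+u. ennreal ((norm (B u))^4) \<partial>P) \<le> ennreal q4"
    and q: "0 \<le> q2" "0 \<le> q4"
  shows "(\<integral>\<^sup>+u. ennreal ((norm (y + t *\<^sub>R B u))^2) \<partial>P) \<le> ennreal ((norm y)^2 + t^2 * q2)"
    and "(\<integral>\<^sup>+u. ennreal ((norm (y + t *\<^sub>R B u))^4) \<partial>P)
           \<le> ennreal ((norm y)^4 + 8 * t^2 * (norm y)^2 * q2 + 3 * t^4 * q4)"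
proof -
  interpret prob_space P by (rule P)
  have int_pow: "integrable P (\<lambda>u. (norm (B u))^k)"
    if "(\<integral>\<^sup>+u. ennreal ((norm (B u))^k) \<partial>P) \<le> ennreal q" for k q
    using that B_meas by (intro integrableI_bounded) (auto simp: le_less_trans)
  have i2: "integrable P (\<lambda>u. (norm (B u))^2)" by (rule int_pow[OF B2])
  have i4: "integrable P (\<lambda>u. (norm (B u))^4)" by (rule int_pow[OF B4])
  have I2: "(\<integral>u. (norm (B u))^2 \<partial>P) \<le> q2" by (rule integral_le_of_nn_integral_le[OF i2 _ B2 q(1)]) simp
  have I4: "(\<integral>u. (norm (B u))^4 \<partial>P) \<le> q4" by (rule integral_le_of_nn_integral_le[OF i4 _ B4 q(2)]) simp
  have iy: "integrable P (\<lambda>u. inner y (B u))" by (rule integrable_inner_right[OF B_int])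
  have iy0: "(\<integral>u. inner y (B u) \<partial>P) = 0" using integral_inner_right[OF B_int, of y] B_mean by simp
  have e2: "(norm (y + t *\<^sub>R B u))^2 = (norm y)^2 + 2 * t * inner y (B u) + t^2 * (norm (B u))^2" for u
    unfolding power2_norm_eq_inner
    by (simp add: inner_add_left inner_add_right inner_commute power2_eq_square algebra_simps)
  have int2: "integrable P (\<lambda>u. (norm y)^2 + 2 * t * inner y (B u) + t^2 * (norm (B u))^2)"
    using iy i2 by auto
  have "(\<integral>\<^sup>+u. ennreal ((norm (y + t *\<^sub>R B u))^2) \<partial>P)
      = ennreal (\<integral>u. (norm y)^2 + 2 * t * inner y (B u) + t^2 * (norm (B u))^2 \<partial>P)"
    unfolding e2 by (rule nn_integral_eq_integral[OF int2]) (simp add: e2[symmetric])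
  also have "(\<integral>u. (norm y)^2 + 2 * t * inner y (B u) + t^2 * (norm (B u))^2 \<partial>P)
      = (norm y)^2 + 2 * t * (\<integral>u. inner y (B u) \<partial>P) + t^2 * (\<integral>u. (norm (B u))^2 \<partial>P)"
    using iy i2 by (simp add: prob_space)
  also have "\<dots> \<le> (norm y)^2 + t^2 * q2" using iy0 I2 by (simp add: mult_left_mono)
  finally show "(\<integral>\<^sup>+u. ennreal ((norm (y + t *\<^sub>R B u))^2) \<partial>P) \<le> ennreal ((norm y)^2 + t^2 * q2)"
    by (simp add: ennreal_leI)
  let ?R = "\<lambda>u. (norm y)^4 + 4 * (norm y)^2 * t * inner y (B u)
                + 8 * (norm y)^2 * t^2 * (norm (B u))^2 + 3 * t^4 * (norm (B u))^4"
  have pw: "(norm (y + t *\<^sub>R B u))^4 \<le> ?R u" for u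
    using norm_add_power4_le[of y "t *\<^sub>R B u"] by (simp add: power_mult_distrib)
  have "(\<integral>\<^sup>+u. ennreal ((norm (y + t *\<^sub>R B u))^4) \<partial>P) \<le> (\<integral>\<^sup>+u. ennreal (?R u) \<partial>P)"
    by (rule nn_integral_mono) (use pw in \<open>simp add: ennreal_leI\<close>)
  also have "\<dots> = ennreal (\<integral>u. ?R u \<partial>P)"
    using iy i2 i4 by (intro nn_integral_eq_integral AE_I2 order_trans[OF _ pw]) auto
  also have "(\<integral>u. ?R u \<partial>P) = (norm y)^4 + 4 * (norm y)^2 * t * (\<integral>u. inner y (B u) \<partial>P)
        + 8 * (norm y)^2 * t^2 * (\<integral>u. (norm (B u))^2 \<partial>P) + 3 * t^4 * (\<integral>u. (norm (B u))^4 \<partial>P)"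
    using iy i2 i4 by (simp add: prob_space)
  also have "\<dots> \<le> (norm y)^4 + 8 * t^2 * (norm y)^2 * q2 + 3 * t^4 * q4"
  proof -
    have "8 * (norm y)^2 * t^2 * (\<integral>u. (norm (B u))^2 \<partial>P) \<le> 8 * (norm y)^2 * t^2 * q2"
      using I2 by (intro mult_left_mono) auto
    moreover have "3 * t^4 * (\<integral>u. (norm (B u))^4 \<partial>P) \<le> 3 * t^4 * q4"
      using I4 by (intro mult_left_mono) auto
    ultimately show ?thesis using iy0 by (simp add: mult_ac)
  qed
  finally show "(\<integral>\<^sup>+u. ennreal ((norm (y + t *\<^sub>R B u))^4) \<partial>P)
      \<le> ennreal ((norm y)^4 + 8 * t^2 * (norm y)^2 * q2 + 3 * t^4 * q4)"
    by (simp add: ennreal_leI)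
qed

lemma nn_integral_std_normal_perturbation:
  fixes y :: "'d::euclidean_space"
  shows "(\<integral>\<^sup>+z. ennreal ((norm (y + t *\<^sub>R z))^2) \<partial>std_normal_vec) \<le> ennreal ((norm y)^2 + t^2 * DIM('d))"
    and "(\<integral>\<^sup>+z. ennreal ((norm (y + t *\<^sub>R z))^4) \<partial>std_normal_vec)
           \<le> ennreal ((norm y)^4 + 8 * t^2 * (norm y)^2 * DIM('d) + 3 * t^4 * (3 * (real DIM('d))^2))"
  using nn_integral_centered_perturbation[OF prob_space_std_normal_vec _ std_normal_vec_mean
      eq_refl[OF nn_integral_std_normal_vec_norm2] nn_integral_std_normal_vec_norm4]
  by (simp_all add: measurable_ident_sets sets_std_normal_vec)

lemma nn_integral_affine_le:
  fixes f1 f2 f3 :: "'a \<Rightarrow> real"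
  assumes P: "prob_space M"
    and meas: "f1 \<in> borel_measurable M" "f2 \<in> borel_measurable M" "f3 \<in> borel_measurable M"
    and nonneg: "\<And>x. 0 \<le> f1 x" "\<And>x. 0 \<le> f2 x" "\<And>x. 0 \<le> f3 x"
    and coeffs: "0 \<le> c1" "0 \<le> c2" "0 \<le> c3" "0 \<le> c0"
    and bounds: "(\<integral>\<^sup>+x. ennreal (f1 x) \<partial>M) \<le> ennreal F1" "(\<integral>\<^sup>+x. ennreal (f2 x) \<partial>M) \<le> ennreal F2"
      "(\<integral>\<^sup>+x. ennreal (f3 x) \<partial>M) \<le> ennreal F3"
    and F: "0 \<le> F1" "0 \<le> F2" "0 \<le> F3"
  shows "(\<integral>\<^sup>+x. ennreal (c1 * f1 x + c2 * f2 x + c3 * f3 x + c0) \<partial>M)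
           \<le> ennreal (c1 * F1 + c2 * F2 + c3 * F3 + c0)"
proof -
  interpret prob_space M by (rule P)
  have split: "ennreal (c1 * x1 + c2 * x2 + c3 * x3 + c0)
      = ennreal c1 * ennreal x1 + (ennreal c2 * ennreal x2 + (ennreal c3 * ennreal x3 + ennreal c0))"
    if "0 \<le> x1" "0 \<le> x2" "0 \<le> x3" for x1 x2 x3
    using that coeffs by (simp add: ennreal_plus[symmetric] ennreal_mult add.assoc)
  have "(\<integral>\<^sup>+x. ennreal (c1 * f1 x + c2 * f2 x + c3 * f3 x + c0) \<partial>M)
      = ennreal c1 * (\<integral>\<^sup>+x. ennreal (f1 x) \<partial>M) + (ennreal c2 * (\<integral>\<^sup>+x. ennreal (f2 x) \<partial>M)
          + (ennreal c3 * (\<integral>\<^sup>+x. ennreal (f3 x) \<partial>M) + ennreal c0))"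
    using meas by (simp add: split nonneg nn_integral_add nn_integral_cmult emeasure_space_1)
  also have "\<dots> \<le> ennreal c1 * ennreal F1 + (ennreal c2 * ennreal F2 + (ennreal c3 * ennreal F3 + ennreal c0))"
    by (intro add_mono mult_left_mono bounds order_refl) auto
  also have "\<dots> = ennreal (c1 * F1 + c2 * F2 + c3 * F3 + c0)"
    using F by (simp add: split)
  finally show ?thesis .
qed

lemma mult_le_weighted_squares: "0 < K \<Longrightarrow> P * r \<le> K/2 * r^2 + P^2/(2*K)" for K P r :: real
proof -
  assume K: "0 < K"
  have "K/2*r^2 + P^2/(2*K) - P*r = (K*r - P)^2/(2*K)"
    using K by (simp add: field_simps power2_eq_square)
  moreover have "0 \<le> (K*r - P)^2/(2*K)" using K by simp
  ultimately show ?thesis by linarith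
qed

lemma power2_le_of_affine_le:
  fixes u r h G A :: real
  assumes u: "0 \<le> u" "u \<le> 1" and r: "0 \<le> r" and h: "0 \<le> h" "h \<le> 1" and G: "0 \<le> G"
    and A: "0 \<le> A" "A \<le> u*r + h*G"
  shows "A^2 \<le> u*r^2 + h*(2*G*r + G^2)"
proof -
  have "A^2 \<le> (u*r + h*G)^2" using A by (intro power_mono) auto
  also have "\<dots> = u^2*r^2 + 2*u*r*h*G + h^2*G^2" by (simp add: power2_eq_square algebra_simps)
  also have "\<dots> \<le> u*r^2 + h*(2*G*r + G^2)"
  proof -
    have "u^2*r^2 \<le> u*r^2" using u r by (simp add: power2_eq_square mult_right_mono mult_left_le_one_le)
    moreover have "u*(2*r*h*G) \<le> 1*(2*r*h*G)" using u r h G by (intro mult_right_mono) auto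
    moreover have "h*(h*G^2) \<le> 1*(h*G^2)" using h G by (intro mult_right_mono) auto
    ultimately show ?thesis by (simp add: power2_eq_square algebra_simps)
  qed
  finally show ?thesis .
qed

lemma moment4_recursion_terms_le:
  fixes r A h K G \<kappa> q2 q4 w :: real
  assumes r: "0 \<le> r" and A: "0 \<le> A" "A \<le> (1-2*h*K)*r + h*G"
    and h: "0 < h" "h \<le> 1" "2*h*K \<le> 1" and K: "0 < K" and G: "0 \<le> G"
    and q2: "0 \<le> q2" "q2 \<le> \<kappa>" and q4: "0 \<le> q4" "q4 \<le> \<kappa>" and w: "0 \<le> w"
  shows "A^2 + 8*(2*h)^2*A*(q2*(1+r)) + 3*(2*h)^4*(q4*(1+r^2)) + 16*h*w*(A + (2*h)^2*(q2*(1+r))) + 26*(h*w)^2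
     \<le> (1-2*h*K)*r^2 + h*(2*G*r + G^2 + 32*h*\<kappa>*((r+G)*(1+r)) + 48*h*\<kappa>*(1+r^2)
                              + 16*w*(r+G+4*\<kappa>*(1+r)) + 26*w^2)"
proof -
  have hh: "h^2 \<le> h" "h^4 \<le> h^2"
    using h by (simp add: power2_eq_square mult_left_le_one_le, intro power_decreasing) auto
  have A_le: "A \<le> r + G"
  proof -
    have "(1-2*h*K)*r \<le> 1*r" "h*G \<le> 1*G" using h K r G by (intro mult_right_mono; simp)+
    then show ?thesis using A by simp
  qed
  have "A^2 \<le> (1-2*h*K)*r^2 + h*(2*G*r + G^2)"
    by (rule power2_le_of_affine_le) (use h K r G A in auto)
  moreover have "8*(2*h)^2*A*(q2*(1+r)) \<le> h*(32*h*\<kappa>*((r+G)*(1+r)))"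
  proof -
    have "A*(q2*(1+r)) \<le> (r+G)*(\<kappa>*(1+r))" using A A_le r q2 by (intro mult_mono mult_right_mono) auto
    then have "(32*h^2)*(A*(q2*(1+r))) \<le> (32*h^2)*((r+G)*(\<kappa>*(1+r)))" by (intro mult_left_mono) auto
    then show ?thesis by (simp add: power2_eq_square algebra_simps)
  qed
  moreover have "3*(2*h)^4*(q4*(1+r^2)) \<le> h*(48*h*\<kappa>*(1+r^2))"
  proof -
    have "h^4*(q4*(1+r^2)) \<le> h^2*(\<kappa>*(1+r^2))" using hh q4 by (intro mult_mono mult_right_mono) auto
    then show ?thesis by (simp add: power2_eq_square algebra_simps)
  qed
  moreover have "16*h*w*(A + (2*h)^2*(q2*(1+r))) \<le> h*(16*w*(r+G+4*\<kappa>*(1+r)))"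
  proof -
    have "h^2*(q2*(1+r)) \<le> 1*(\<kappa>*(1+r))" using h q2 r by (intro mult_mono mult_right_mono) (auto simp: power_le_one)
    then have "A + (2*h)^2*(q2*(1+r)) \<le> r+G+4*\<kappa>*(1+r)" using A_le by (simp add: power2_eq_square)
    then have "(16*h*w)*(A + (2*h)^2*(q2*(1+r))) \<le> (16*h*w)*(r+G+4*\<kappa>*(1+r))"
      using h w by (intro mult_left_mono) auto
    then show ?thesis by (simp add: algebra_simps)
  qed
  moreover have "26*(h*w)^2 \<le> h*(26*w^2)"
    using mult_right_mono[OF hh(1), of "26*w^2"] by (simp add: power_mult_distrib algebra_simps)
  ultimately show ?thesis by (simp add: distrib_left)
qed

definition moment4_const :: "real \<Rightarrow> real \<Rightarrow> real \<Rightarrow> real \<Rightarrow> real" where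
  "moment4_const K \<kappa> G w =
     G^2 + 32*\<kappa>*G + 48*\<kappa> + 16*w*(G+4*\<kappa>) + 26*w^2 + (2*G + 32*\<kappa>*(1+G) + 16*w*(1+4*\<kappa>))^2/(2*K)"

lemma moment4_const_nonneg: "0 < K \<Longrightarrow> 0 \<le> \<kappa> \<Longrightarrow> 0 \<le> G \<Longrightarrow> 0 \<le> w \<Longrightarrow> 0 \<le> moment4_const K \<kappa> G w"
  unfolding moment4_const_def by (intro add_nonneg_nonneg mult_nonneg_nonneg divide_nonneg_nonneg) auto

lemma moment4_recursion_le:
  fixes r A h K G \<kappa> q2 q4 w :: real
  assumes r: "0 \<le> r" and A: "0 \<le> A" "A \<le> (1-2*h*K)*r + h*G"
    and h: "0 < h" "h \<le> 1" "2*h*K \<le> 1" "160*h*\<kappa> \<le> K" and K: "0 < K" and G: "0 \<le> G" and \<kappa>: "0 \<le> \<kappa>"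
    and q2: "0 \<le> q2" "q2 \<le> \<kappa>" and q4: "0 \<le> q4" "q4 \<le> \<kappa>" and w: "0 \<le> w"
  shows "A^2 + 8*(2*h)^2*A*(q2*(1+r)) + 3*(2*h)^4*(q4*(1+r^2)) + 16*h*w*(A + (2*h)^2*(q2*(1+r))) + 26*(h*w)^2
     \<le> (1-h*K)*r^2 + h * moment4_const K \<kappa> G w"
proof -
  define P1 where "P1 = 2*G + 32*\<kappa>*(1+G) + 16*w*(1+4*\<kappa>)"
  define P0 where "P0 = G^2 + 32*\<kappa>*G + 48*\<kappa> + 16*w*(G+4*\<kappa>) + 26*w^2"
  have e: "32*h*\<kappa>*((r+G)*(1+r)) + 48*h*\<kappa>*(1+r^2)
      = (80*h*\<kappa>)*r^2 + (h*(32*\<kappa>*(1+G)))*r + h*(\<kappa>*(32*G+48))"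
    by (simp add: power2_eq_square algebra_simps)
  have a1: "(80*h*\<kappa>)*r^2 \<le> K/2*r^2" using h r by (intro mult_right_mono) auto
  have a2: "(h*(32*\<kappa>*(1+G)))*r \<le> (1*(32*\<kappa>*(1+G)))*r" using h r \<kappa> G by (intro mult_right_mono) auto
  have a3: "h*(\<kappa>*(32*G+48)) \<le> 1*(\<kappa>*(32*G+48))" using h \<kappa> G by (intro mult_right_mono) auto
  have r1: "K/2*r^2 + P1*r + P0
      = K/2*r^2 + 2*G*r + G^2 + (32*\<kappa>*(1+G))*r + \<kappa>*(32*G+48) + 16*w*(r+G+4*\<kappa>*(1+r)) + 26*w^2"
    by (simp add: P0_def P1_def algebra_simps)
  have "2*G*r + G^2 + 32*h*\<kappa>*((r+G)*(1+r)) + 48*h*\<kappa>*(1+r^2) + 16*w*(r+G+4*\<kappa>*(1+r)) + 26*w^2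
      \<le> K/2*r^2 + P1*r + P0"
    unfolding r1 using e a1 a2 a3 by linarith
  also have "\<dots> \<le> K*r^2 + moment4_const K \<kappa> G w"
    using mult_le_weighted_squares[OF K, of P1 r] by (simp add: moment4_const_def P0_def P1_def)
  finally have bracket: "2*G*r + G^2 + 32*h*\<kappa>*((r+G)*(1+r)) + 48*h*\<kappa>*(1+r^2) + 16*w*(r+G+4*\<kappa>*(1+r)) + 26*w^2
      \<le> K*r^2 + moment4_const K \<kappa> G w" .
  have "(1-2*h*K)*r^2 + h*(2*G*r + G^2 + 32*h*\<kappa>*((r+G)*(1+r)) + 48*h*\<kappa>*(1+r^2)
                              + 16*w*(r+G+4*\<kappa>*(1+r)) + 26*w^2)
      \<le> (1-2*h*K)*r^2 + h*(K*r^2 + moment4_const K \<kappa> G w)"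
    using h by (intro add_left_mono mult_left_mono bracket) auto
  also have "\<dots> = (1-h*K)*r^2 + h * moment4_const K \<kappa> G w" by (simp add: algebra_simps)
  finally show ?thesis
    using moment4_recursion_terms_le[OF r A h(1-3) K G q2 q4 w] by linarith
qed

lemma diff_moment4_recursion_terms_le:
  fixes p A h K P2 Q2 \<kappa> e q2 q4 :: real
  assumes p: "0 \<le> p" and A: "0 \<le> A" "A \<le> (1-2*h*K)*p"
    and h: "0 < h" "h \<le> 1" "2*h*K \<le> 1" and K: "0 < K" and PQ: "0 \<le> P2" "0 \<le> Q2"
    and \<kappa>: "0 \<le> \<kappa>" and e: "0 \<le> e" and q2: "0 \<le> q2" "q2 \<le> \<kappa>*e/2" and q4: "0 \<le> q4" "q4 \<le> \<kappa>*e^2/4"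
  shows "(A^2 + 8*(-(2*h))^2*A*(q2*(1+Q2)) + 3*(-(2*h))^4*(q4*(1+Q2^2)))
          + (8*(2*h)^2*(q2*(1+P2)))*(A + (-(2*h))^2*(q2*(1+Q2))) + 3*(2*h)^4*(q4*(1+P2^2))
       \<le> (1-2*h*K)*p^2 + (16*h^2*\<kappa>*e*(2+P2+Q2))*p + 8*h^4*\<kappa>^2*e^2*(2+P2+Q2)^2
          + 12*h^4*\<kappa>*e^2*(2+(P2^2+Q2^2))"
proof -
  define u where "u = 1-2*h*K"
  define W where "W = 2+P2+Q2"
  define X where "X = P2^2+Q2^2"
  have X: "0 \<le> X" by (simp add: X_def)
  have u: "0 \<le> u" "u \<le> 1" using h K by (auto simp: u_def)
  have W: "0 \<le> W" using PQ by (simp add: W_def)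
  have A_le: "A \<le> p"
    using A mult_right_mono[OF u(2) p] by (simp add: u_def)
  have "A^2 \<le> u*p^2"
    using power2_le_of_affine_le[OF u p order_refl zero_le_one order_refl A(1)] A(2) by (simp add: u_def)
  moreover have "8*(-(2*h))^2*A*(q2*(1+Q2)) + (8*(2*h)^2*(q2*(1+P2)))*A \<le> (16*h^2*\<kappa>*e*W)*p"
  proof -
    have "8*(-(2*h))^2*A*(q2*(1+Q2)) + (8*(2*h)^2*(q2*(1+P2)))*A = (32*h^2*W)*(q2*A)"
      by (simp add: W_def power2_eq_square algebra_simps)
    also have "\<dots> \<le> (32*h^2*W)*((\<kappa>*e/2)*p)"
      using W q2 A A_le by (intro mult_left_mono mult_mono) auto
    finally show ?thesis by (simp add: algebra_simps)
  qed
  moreover have "(8*(2*h)^2*(q2*(1+P2)))*((-(2*h))^2*(q2*(1+Q2))) \<le> 8*h^4*\<kappa>^2*e^2*W^2"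
  proof -
    have PQ_W: "(1+P2)*(1+Q2) \<le> W^2/4"
      using zero_le_power2[of "P2-Q2"] by (simp add: W_def power2_eq_square field_simps)
    have "(8*(2*h)^2*(q2*(1+P2)))*((-(2*h))^2*(q2*(1+Q2))) = (128*h^4)*(q2^2*((1+P2)*(1+Q2)))"
      by (simp add: power2_eq_square power4_eq_xxxx algebra_simps)
    also have "\<dots> \<le> (128*h^4)*((\<kappa>*e/2)^2*(W^2/4))"
      using q2 PQ PQ_W by (intro mult_left_mono mult_mono power_mono) auto
    also have "\<dots> = 8*h^4*\<kappa>^2*e^2*W^2" by (simp add: power2_eq_square)
    finally show ?thesis .
  qed
  moreover have "3*(-(2*h))^4*(q4*(1+Q2^2)) + 3*(2*h)^4*(q4*(1+P2^2)) \<le> 12*h^4*\<kappa>*e^2*(2+X)"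
  proof -
    have "3*(-(2*h))^4*(q4*(1+Q2^2)) + 3*(2*h)^4*(q4*(1+P2^2)) = (48*h^4)*(q4*(2+X))"
      by (simp add: X_def power_mult_distrib algebra_simps)
    also have "\<dots> \<le> (48*h^4)*((\<kappa>*e^2/4)*(2+X))"
      using q4 X by (intro mult_left_mono mult_right_mono) auto
    also have "\<dots> = 12*h^4*\<kappa>*e^2*(2+X)" by simp
    finally show ?thesis .
  qed
  moreover have "(A^2 + 8*(-(2*h))^2*A*(q2*(1+Q2)) + 3*(-(2*h))^4*(q4*(1+Q2^2)))
          + (8*(2*h)^2*(q2*(1+P2)))*(A + (-(2*h))^2*(q2*(1+Q2))) + 3*(2*h)^4*(q4*(1+P2^2))
     = A^2 + (8*(-(2*h))^2*A*(q2*(1+Q2)) + (8*(2*h)^2*(q2*(1+P2)))*A)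
       + (8*(2*h)^2*(q2*(1+P2)))*((-(2*h))^2*(q2*(1+Q2)))
       + (3*(-(2*h))^4*(q4*(1+Q2^2)) + 3*(2*h)^4*(q4*(1+P2^2)))"
    by (simp add: algebra_simps)
  ultimately show ?thesis
    unfolding u_def[symmetric] W_def[symmetric] X_def[symmetric] by linarith
qed

lemma diff_moment4_recursion_le:
  fixes p A h K P2 Q2 \<kappa> e q2 q4 :: real
  assumes p: "0 \<le> p" and A: "0 \<le> A" "A \<le> (1-2*h*K)*p"
    and h: "0 < h" "h \<le> 1" "2*h*K \<le> 1" and K: "0 < K" and PQ: "0 \<le> P2" "0 \<le> Q2"
    and \<kappa>: "0 \<le> \<kappa>" and e: "0 \<le> e" and q2: "0 \<le> q2" "q2 \<le> \<kappa>*e/2" and q4: "0 \<le> q4" "q4 \<le> \<kappa>*e^2/4"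
  shows "(A^2 + 8*(-(2*h))^2*A*(q2*(1+Q2)) + 3*(-(2*h))^4*(q4*(1+Q2^2)))
          + (8*(2*h)^2*(q2*(1+P2)))*(A + (-(2*h))^2*(q2*(1+Q2))) + 3*(2*h)^4*(q4*(1+P2^2))
       \<le> (1-h*K)*p^2 + h^3*e^2*((384*\<kappa>^2/K + 48*\<kappa>^2 + 12*\<kappa>)*(2+P2^2+Q2^2))"
proof -
  define W X where "W = 2+P2+Q2" and "X = P2^2+Q2^2"
  have X: "0 \<le> X" by (simp add: X_def)
  have W2: "W^2 \<le> 3*(4+X)"
    using zero_le_power2[of "2-P2"] zero_le_power2[of "P2-Q2"] zero_le_power2[of "2-Q2"]
    by (simp add: W_def X_def power2_eq_square algebra_simps)
  have h43: "h^4 \<le> h^3" using h by (intro power_decreasing) auto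
  have "(16*h^2*\<kappa>*e*W)*p \<le> (2*h*K)/2*p^2 + (16*h^2*\<kappa>*e*W)^2/(2*(2*h*K))"
    by (rule mult_le_weighted_squares) (use h K in simp)
  also have "(16*h^2*\<kappa>*e*W)^2/(2*(2*h*K)) = h^3*e^2*(64*\<kappa>^2/K)*W^2"
    using h K by (simp add: power2_eq_square power3_eq_cube field_simps)
  also have "\<dots> \<le> h^3*e^2*(64*\<kappa>^2/K)*(3*(4+X))"
    using W2 h K by (intro mult_left_mono) auto
  finally have cross: "(16*h^2*\<kappa>*e*W)*p \<le> h*K*p^2 + h^3*e^2*((192*\<kappa>^2/K)*(4+X))"
    by (simp add: algebra_simps)
  have "(h^4*(8*\<kappa>^2*e^2))*W^2 \<le> (h^3*(8*\<kappa>^2*e^2))*(3*(4+X))"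
    using W2 h43 h by (intro mult_mono) auto
  then have noise2: "8*h^4*\<kappa>^2*e^2*W^2 \<le> h^3*e^2*((24*\<kappa>^2)*(4+X))"
    by (simp add: algebra_simps)
  have noise4: "12*h^4*\<kappa>*e^2*(2+X) \<le> h^3*e^2*(12*\<kappa>*(2+X))"
    using mult_right_mono[OF h43, of "12*\<kappa>*e^2*(2+X)"] \<kappa> X by (simp add: algebra_simps)
  have "(192*\<kappa>^2/K)*(4+X) + (24*\<kappa>^2)*(4+X) + 12*\<kappa>*(2+X) \<le> (384*\<kappa>^2/K + 48*\<kappa>^2 + 12*\<kappa>)*(2+X)"
    using X K by (simp add: field_simps)
  then have "(h^3*e^2)*((192*\<kappa>^2/K)*(4+X) + (24*\<kappa>^2)*(4+X) + 12*\<kappa>*(2+X))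
      \<le> (h^3*e^2)*((384*\<kappa>^2/K + 48*\<kappa>^2 + 12*\<kappa>)*(2+X))"
    using h by (intro mult_left_mono) auto
  then have collect: "h^3*e^2*((192*\<kappa>^2/K)*(4+X)) + h^3*e^2*((24*\<kappa>^2)*(4+X)) + h^3*e^2*(12*\<kappa>*(2+X))
      \<le> h^3*e^2*((384*\<kappa>^2/K + 48*\<kappa>^2 + 12*\<kappa>)*(2+X))"
    by (simp add: algebra_simps)
  have contract: "(1-2*h*K)*p^2 + h*K*p^2 = (1-h*K)*p^2" by (simp add: algebra_simps)
  have "2+P2^2+Q2^2 = 2+X" by (simp add: X_def)
  show ?thesis
    using diff_moment4_recursion_terms_le[OF assms, folded W_def X_def] cross noise2 noise4 collect contract
    unfolding \<open>2+P2^2+Q2^2 = 2+X\<close> by linarith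
qed

section \<open>Contraction of the Euler drift step\<close>

lemma norm_euler_step_le:
  fixes a :: "'d::euclidean_space \<Rightarrow> 'd" and x :: 'd
  assumes lip: "\<And>x y. norm (a x - a y) \<le> L * norm (x - y)"
    and diss: "\<And>x y. inner (x - y) (a x - a y) \<le> - K * (norm (x - y))\<^sup>2"
    and K: "0 < K" and h: "0 < h" "h \<le> 1" "8*h*L^2 \<le> K"
  shows "(norm (x + (2*h) *\<^sub>R a x))^2 \<le> (1-2*h*K)*(norm x)^2 + h*(4*(norm (a 0))^2/K + 8*(norm (a 0))^2)"
proof -
  define r a0 where "r = (norm x)^2" and "a0 = norm (a 0)"
  have expand: "(norm (x + (2*h) *\<^sub>R a x))^2 = r + 4*h*inner x (a x) + 4*h^2*(norm (a x))^2"
    unfolding r_def power2_norm_eq_inner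
    by (simp add: inner_add_left inner_add_right inner_commute power2_eq_square algebra_simps)
  have "inner x (a x) = inner (x - 0) (a x - a 0) + inner x (a 0)" by (simp add: inner_diff_right)
  then have drift: "inner x (a x) \<le> -K*r + norm x * a0"
    using diss[of x 0] norm_cauchy_schwarz[of x "a 0"] by (simp add: r_def a0_def)
  have "norm (a x) \<le> a0 + \<bar>L\<bar> * norm x"
    using norm_triangle_sub[of "a x" "a 0"] lip[of x 0] mult_right_mono[OF abs_ge_self, of "norm x" L]
    by (simp add: a0_def)
  then have "(norm (a x))^2 \<le> (a0 + \<bar>L\<bar> * norm x)^2" by (intro power_mono) auto
  also have "\<dots> \<le> 2*a0^2 + 2*L^2*r"
    using zero_le_power2[of "a0 - \<bar>L\<bar> * norm x"] by (simp add: r_def power2_eq_square algebra_simps)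
  finally have growth: "4*h^2*(norm (a x))^2 \<le> 4*h^2*(2*a0^2 + 2*L^2*r)" by (intro mult_left_mono) auto
  have "K/4*(norm x)^2 + a0^2/K - norm x * a0 = (K*norm x - 2*a0)^2/(4*K)"
    using K by (simp add: field_simps power2_eq_square)
  then have "norm x * a0 \<le> K/4*(norm x)^2 + a0^2/K"
    using K zero_le_power2[of "K*norm x - 2*a0"] by (smt (verit) divide_nonneg_pos)
  then have young: "4*h*(norm x * a0) \<le> h*K*r + 4*h*a0^2/K"
    using mult_left_mono[of _ _ "4*h"] h by (fastforce simp: r_def algebra_simps)
  have small_h: "4*h^2*(2*a0^2 + 2*L^2*r) \<le> h*K*r + 8*h*a0^2"
  proof -
    have "(h*(8*h*L^2))*r \<le> (h*K)*r" using h by (intro mult_right_mono mult_left_mono) (auto simp: r_def)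
    moreover have "(h*h)*(8*a0^2) \<le> (h*1)*(8*a0^2)" using h by (intro mult_right_mono mult_left_mono) auto
    ultimately show ?thesis by (simp add: power2_eq_square algebra_simps)
  qed
  have "4*h*inner x (a x) \<le> 4*h*(-K*r + norm x * a0)" using drift h by (intro mult_left_mono) auto
  then show ?thesis
    using expand growth young small_h by (simp add: r_def[symmetric] a0_def[symmetric] algebra_simps)
qed

lemma norm_euler_step_diff_le:
  fixes a :: "'d::euclidean_space \<Rightarrow> 'd" and p q :: 'd
  assumes lip: "\<And>x y. norm (a x - a y) \<le> L * norm (x - y)"
    and diss: "\<And>x y. inner (x - y) (a x - a y) \<le> - K * (norm (x - y))\<^sup>2"
    and K: "0 < K" and h: "0 < h" "8*h*L^2 \<le> K"
  shows "(norm (p - q + (2*h) *\<^sub>R (a p - a q)))^2 \<le> (1-2*h*K)*(norm (p - q))^2"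
proof -
  define r where "r = (norm (p - q))^2"
  have expand: "(norm (p - q + (2*h) *\<^sub>R (a p - a q)))^2
      = r + 4*h*inner (p - q) (a p - a q) + 4*h^2*(norm (a p - a q))^2"
    unfolding r_def power2_norm_eq_inner
    by (simp add: inner_add_left inner_add_right inner_commute power2_eq_square algebra_simps)
  have "norm (a p - a q) \<le> \<bar>L\<bar> * norm (p - q)"
    using lip[of p q] mult_right_mono[OF abs_ge_self, of "norm (p - q)" L] by simp
  then have "(norm (a p - a q))^2 \<le> L^2*r"
    using power_mono[of _ _ 2] by (fastforce simp: r_def power_mult_distrib)
  then have "4*h^2*(norm (a p - a q))^2 \<le> 4*h^2*(L^2*r)" by (intro mult_left_mono) auto
  moreover have "4*h*inner (p - q) (a p - a q) \<le> 4*h*(-K*r)"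
    using diss[of p q] h by (intro mult_left_mono) (auto simp: r_def)
  moreover have "4*h^2*(L^2*r) \<le> 2*h*K*r"
  proof -
    have "0 \<le> h*L^2" using h by simp
    then have "4*h*L^2 \<le> 2*K" using h(2) by linarith
    then have "(h*(4*h*L^2))*r \<le> (h*(2*K))*r" using h by (intro mult_right_mono mult_left_mono) (auto simp: r_def)
    then show ?thesis by (simp add: power2_eq_square algebra_simps)
  qed
  ultimately show ?thesis
    using expand unfolding r_def[symmetric] by (simp add: algebra_simps)
qed

definition norm_quartic :: "real \<Rightarrow> real \<Rightarrow> 'd::real_normed_vector \<Rightarrow> real" where
  "norm_quartic \<alpha> \<gamma> y = (norm y)^4 + \<alpha> * (norm y)^2 + \<gamma>"

lemma borel_measurable_norm_quartic [measurable]: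
  "(\<lambda>y. norm_quartic \<alpha> \<gamma> y) \<in> borel_measurable borel"
  unfolding norm_quartic_def by measurable

lemma nn_integral_norm_quartic_le:
  fixes f :: "'u \<Rightarrow> 'd::euclidean_space"
  assumes P: "prob_space P" and f: "f \<in> borel_measurable P" and \<alpha>\<gamma>: "0 \<le> \<alpha>" "0 \<le> \<gamma>"
    and F4: "(\<integral>\<^sup>+u. ennreal ((norm (f u))^4) \<partial>P) \<le> ennreal F4" and "0 \<le> F4"
    and F2: "(\<integral>\<^sup>+u. ennreal ((norm (f u))^2) \<partial>P) \<le> ennreal F2" and "0 \<le> F2"
  shows "(\<integral>\<^sup>+u. ennreal (norm_quartic \<alpha> \<gamma> (f u)) \<partial>P) \<le> ennreal (F4 + \<alpha> * F2 + \<gamma>)"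
  using nn_integral_affine_le[OF P _ _ _ _ _ _ _ \<alpha>\<gamma>(1) order_refl \<alpha>\<gamma>(2) F4 F2 _ \<open>0 \<le> F4\<close> \<open>0 \<le> F2\<close> order_refl,
      of "\<lambda>_. 0" 1] f
  by (simp add: norm_quartic_def)

lemma nn_integral_std_normal_quartic_le:
  fixes y :: "'d::euclidean_space"
  assumes "0 \<le> \<alpha>" "0 \<le> \<gamma>"
  shows "(\<integral>\<^sup>+z. ennreal (norm_quartic \<alpha> \<gamma> (y + c *\<^sub>R z)) \<partial>std_normal_vec)
     \<le> ennreal (norm_quartic (\<alpha> + 8 * c^2 * DIM('d)) (\<gamma> + \<alpha> * c^2 * DIM('d) + 9 * c^4 * (real DIM('d))^2) y)"
proof -
  have "(\<integral>\<^sup>+z. ennreal (norm_quartic \<alpha> \<gamma> (y + c *\<^sub>R z)) \<partial>std_normal_vec)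
      \<le> ennreal (((norm y)^4 + 8 * c^2 * (norm y)^2 * DIM('d) + 3 * c^4 * (3 * (real DIM('d))^2))
                 + \<alpha> * ((norm y)^2 + c^2 * DIM('d)) + \<gamma>)"
    by (rule nn_integral_norm_quartic_le[OF prob_space_std_normal_vec _ assms
          nn_integral_std_normal_perturbation(2) _ nn_integral_std_normal_perturbation(1)])
       (auto simp: measurable_cong_sets[OF sets_std_normal_vec refl])
  also have "\<dots> = ennreal (norm_quartic (\<alpha> + 8 * c^2 * DIM('d)) (\<gamma> + \<alpha> * c^2 * DIM('d) + 9 * c^4 * (real DIM('d))^2) y)"
    by (simp add: norm_quartic_def algebra_simps)
  finally show ?thesis .
qed

section \<open>The coupled coarse chains\<close>

definition inputs_before :: "nat \<Rightarrow> src set" where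
  "inputs_before n = insert SrcX0 (SrcZ ` {1..n} \<union> SrcU ` {..<n})"

locale coarse_coupling = chain_inputs M X0 Z U
  for M :: "'a measure" and X0 :: "'a \<Rightarrow> 'd::euclidean_space" and Z :: "nat \<Rightarrow> 'a \<Rightarrow> 'd"
    and U :: "nat \<Rightarrow> 'a \<Rightarrow> 'u::euclidean_space" +
  fixes Q :: "'u measure" and a :: "'d \<Rightarrow> 'd" and b :: "'d \<Rightarrow> 'u \<Rightarrow> 'd" and q2 q4 :: real
  assumes Z_law: "\<And>k. 1 \<le> k \<Longrightarrow> distr M borel (Z k) = std_normal_vec"
    and U_law: "\<And>k. distr M borel (U k) = Q"
    and prob_space_Q: "prob_space Q" and sets_Q: "sets Q = sets borel"
    and a_measurable [measurable]: "a \<in> borel_measurable borel"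
    and b_measurable: "(\<lambda>(x, u). b x u) \<in> borel_measurable (borel \<Otimes>\<^sub>M borel)"
    and unbiased: "\<And>x. integrable Q (b x) \<and> (\<integral>u. b x u \<partial>Q) = a x"
    and noise2: "\<And>x. (\<integral>\<^sup>+u. ennreal ((norm (b x u - a x))^2) \<partial>Q) \<le> ennreal (q2 * (1 + (norm x)^2))"
    and noise4: "\<And>x. (\<integral>\<^sup>+u. ennreal ((norm (b x u - a x))^4) \<partial>Q) \<le> ennreal (q4 * (1 + (norm x)^4))"
    and q2_nonneg: "0 \<le> q2" and q4_nonneg: "0 \<le> q4"
begin

lemma measurable_b [measurable (raw)]:
  "f \<in> borel_measurable N \<Longrightarrow> g \<in> borel_measurable N \<Longrightarrow> (\<lambda>\<omega>. b (f \<omega>) (g \<omega>)) \<in> borel_measurable N"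
  using measurable_compose[OF measurable_Pair b_measurable] by simp

lemma measurable_coarse_chain:
  assumes "off \<le> 1"
  shows "inputs_before (2*m) \<subseteq> A \<Longrightarrow> coarse_chain b \<beta> h X0 Z U off m \<in> measurable (\<F> A) borel"
proof (induction m)
  case 0
  then show ?case by (auto simp: inputs_before_def intro: measurable_input_sigma_inputs)
next
  case (Suc m)
  have "inputs_before (2*m) \<subseteq> A" using Suc.prems by (auto simp: inputs_before_def)
  moreover have "U (2*m + off) \<in> measurable (\<F> A) borel" "Z (2*m+1) \<in> measurable (\<F> A) borel"
      "Z (2*m+2) \<in> measurable (\<F> A) borel"
    using Suc.prems assms by (auto simp: inputs_before_def intro!: measurable_input_sigma_inputs)
  ultimately show ?case
    using Suc.IH by (simp add: Let_def)
qed

lemma borel_measurable_coarse_chain [measurable]: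
  "off \<le> 1 \<Longrightarrow> coarse_chain b \<beta> h X0 Z U off m \<in> borel_measurable M"
  by (rule measurable_input_sigma_imp_measurable[OF measurable_coarse_chain]) auto

lemma drift_noise_perturbation:
  shows "(\<integral>\<^sup>+u. ennreal ((norm (y + t *\<^sub>R (b x u - a x)))^2) \<partial>Q) \<le> ennreal ((norm y)^2 + t^2 * (q2 * (1 + (norm x)^2)))"
    and "(\<integral>\<^sup>+u. ennreal ((norm (y + t *\<^sub>R (b x u - a x)))^4) \<partial>Q)
           \<le> ennreal ((norm y)^4 + 8 * t^2 * (norm y)^2 * (q2 * (1 + (norm x)^2)) + 3 * t^4 * (q4 * (1 + (norm x)^4)))"
proof -
  interpret Q: prob_space Q by (rule prob_space_Q)
  have B: "(\<lambda>u. b x u - a x) \<in> borel_measurable Q"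
    by (simp add: measurable_cong_sets[OF sets_Q refl])
  have "integrable Q (\<lambda>u. b x u - a x)" "(\<integral>u. b x u - a x \<partial>Q) = 0"
    using unbiased[of x] by (auto simp: Q.prob_space)
  note centered = nn_integral_centered_perturbation[OF prob_space_Q B this noise2 noise4]
  show "(\<integral>\<^sup>+u. ennreal ((norm (y + t *\<^sub>R (b x u - a x)))^2) \<partial>Q) \<le> ennreal ((norm y)^2 + t^2 * (q2 * (1 + (norm x)^2)))"
    by (rule centered(1)) (use q2_nonneg q4_nonneg in auto)
  show "(\<integral>\<^sup>+u. ennreal ((norm (y + t *\<^sub>R (b x u - a x)))^4) \<partial>Q)
      \<le> ennreal ((norm y)^4 + 8 * t^2 * (norm y)^2 * (q2 * (1 + (norm x)^2)) + 3 * t^4 * (q4 * (1 + (norm x)^4)))"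
    by (rule centered(2)) (use q2_nonneg q4_nonneg in auto)
qed

definition drift_quartic_bound :: "real \<Rightarrow> real \<Rightarrow> real \<Rightarrow> 'd \<Rightarrow> 'd \<Rightarrow> real" where
  "drift_quartic_bound t \<alpha> \<gamma> x y =
     (norm y)^4 + 8 * t^2 * (norm y)^2 * (q2 * (1 + (norm x)^2)) + 3 * t^4 * (q4 * (1 + (norm x)^4))
     + \<alpha> * ((norm y)^2 + t^2 * (q2 * (1 + (norm x)^2))) + \<gamma>"

lemma nn_integral_drift_quartic_le:
  assumes "0 \<le> \<alpha>" "0 \<le> \<gamma>"
  shows "(\<integral>\<^sup>+u. ennreal (norm_quartic \<alpha> \<gamma> (y + t *\<^sub>R (b x u - a x))) \<partial>Q)
       \<le> ennreal (drift_quartic_bound t \<alpha> \<gamma> x y)"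
  unfolding drift_quartic_bound_def
  by (rule nn_integral_norm_quartic_le[OF prob_space_Q _ assms drift_noise_perturbation(2) _
        drift_noise_perturbation(1)])
     (use q2_nonneg q4_nonneg in \<open>auto simp: measurable_cong_sets[OF sets_Q refl]\<close>)

lemma nn_integral_gaussian_step_le:
  assumes fresh: "SrcZ k \<notin> A" "1 \<le> k" "SrcZ 0 \<notin> A" and Y: "Y \<in> measurable (\<F> A) borel"
    and \<alpha>\<gamma>: "0 \<le> \<alpha>" "0 \<le> \<gamma>"
  shows "(\<integral>\<^sup>+\<omega>. ennreal (norm_quartic \<alpha> \<gamma> (Y \<omega> + c *\<^sub>R Z k \<omega>)) \<partial>M)
    \<le> (\<integral>\<^sup>+\<omega>. ennreal (norm_quartic (\<alpha> + 8 * c^2 * DIM('d)) (\<gamma> + \<alpha> * c^2 * DIM('d) + 9 * c^4 * (real DIM('d))^2) (Y \<omega>)) \<partial>M)"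
proof -
  have "(\<integral>\<^sup>+\<omega>. ennreal (norm_quartic \<alpha> \<gamma> (Y \<omega> + c *\<^sub>R Z k \<omega>)) \<partial>M)
      = (\<integral>\<^sup>+\<omega>. (\<lambda>p. ennreal (norm_quartic \<alpha> \<gamma> (fst p + c *\<^sub>R snd p))) (Y \<omega>, Z k \<omega>) \<partial>M)"
    by simp
  also have "\<dots> \<le> (\<integral>\<^sup>+\<omega>. (\<lambda>v. ennreal (norm_quartic (\<alpha> + 8 * c^2 * DIM('d))
                                 (\<gamma> + \<alpha> * c^2 * DIM('d) + 9 * c^4 * (real DIM('d))^2) v)) (Y \<omega>) \<partial>M)"
    by (rule nn_integral_fresh_input_le[OF fresh(1) _ fresh(3) Y _ Z_measurable Z_law[OF fresh(2)]])
       (use fresh(2) nn_integral_std_normal_quartic_le[OF \<alpha>\<gamma>] in simp_all)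
  finally show ?thesis .
qed

lemma nn_integral_drift_step_le:
  fixes V :: "'a \<Rightarrow> 'v::euclidean_space" and y x :: "'v \<Rightarrow> 'd" and \<alpha> \<gamma> :: "'v \<Rightarrow> real"
  assumes fresh: "SrcU j \<notin> A" "SrcZ 0 \<notin> A" and V: "V \<in> measurable (\<F> A) borel"
    and [measurable]: "y \<in> borel_measurable borel" "x \<in> borel_measurable borel"
      "\<alpha> \<in> borel_measurable borel" "\<gamma> \<in> borel_measurable borel"
    and \<alpha>\<gamma>: "\<And>v. 0 \<le> \<alpha> v" "\<And>v. 0 \<le> \<gamma> v"
  shows "(\<integral>\<^sup>+\<omega>. ennreal (norm_quartic (\<alpha> (V \<omega>)) (\<gamma> (V \<omega>))
                     (y (V \<omega>) + t *\<^sub>R (b (x (V \<omega>)) (U j \<omega>) - a (x (V \<omega>))))) \<partial>M)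
    \<le> (\<integral>\<^sup>+\<omega>. ennreal (drift_quartic_bound t (\<alpha> (V \<omega>)) (\<gamma> (V \<omega>)) (x (V \<omega>)) (y (V \<omega>))) \<partial>M)"
proof -
  let ?g = "\<lambda>p. ennreal (norm_quartic (\<alpha> (fst p)) (\<gamma> (fst p))
                  (y (fst p) + t *\<^sub>R (b (x (fst p)) (snd p) - a (x (fst p)))))"
  have "(\<integral>\<^sup>+\<omega>. ennreal (norm_quartic (\<alpha> (V \<omega>)) (\<gamma> (V \<omega>))
                     (y (V \<omega>) + t *\<^sub>R (b (x (V \<omega>)) (U j \<omega>) - a (x (V \<omega>))))) \<partial>M)
      = (\<integral>\<^sup>+\<omega>. ?g (V \<omega>, U j \<omega>) \<partial>M)"
    by simp
  also have "\<dots> \<le> (\<integral>\<^sup>+\<omega>. (\<lambda>v. ennreal (drift_quartic_bound t (\<alpha> v) (\<gamma> v) (x v) (y v))) (V \<omega>) \<partial>M)"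
    by (rule nn_integral_fresh_input_le[OF fresh(1) _ fresh(2) V _ U_measurable U_law])
       (use nn_integral_drift_quartic_le[OF \<alpha>\<gamma>] in \<open>simp_all add: drift_quartic_bound_def norm_quartic_def\<close>)
  finally show ?thesis .
qed

lemma coarse_chain_moment4_step:
  assumes off: "off \<le> 1"
  shows "(\<integral>\<^sup>+\<omega>. ennreal ((norm (coarse_chain b \<beta> h X0 Z U off (Suc m) \<omega>))^4) \<partial>M)
    \<le> (\<integral>\<^sup>+\<omega>. ennreal (let x = coarse_chain b \<beta> h X0 Z U off m \<omega> in
          drift_quartic_bound (2*h) (16 * (\<beta> * sqrt h)^2 * DIM('d)) (26 * (\<beta> * sqrt h)^4 * (real DIM('d))^2)
            x (x + (2*h) *\<^sub>R a x)) \<partial>M)"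
proof -
  define X where "X = coarse_chain b \<beta> h X0 Z U off m"
  define c n where "c = \<beta> * sqrt h" and "n = real DIM('d)"
  define j where "j = 2*m + off"
  define Y where "Y = (\<lambda>\<omega>. X \<omega> + (2*h) *\<^sub>R b (X \<omega>) (U j \<omega>))"
  define A0 where "A0 = inputs_before (2*m)"
  define A1 where "A1 = insert (SrcU j) A0"
  define A2 where "A2 = insert (SrcZ (2*m+1)) A1"
  have X_meas: "X \<in> measurable (\<F> A) borel" if "A0 \<subseteq> A" for A
    unfolding X_def by (rule measurable_coarse_chain[OF off]) (use that in \<open>simp add: A0_def\<close>)
  have Y_meas: "Y \<in> measurable (\<F> A) borel" if "A1 \<subseteq> A" for A
  proof -
    have "U j \<in> measurable (\<F> A) borel" using that by (intro measurable_input_sigma_inputs) (simp add: A1_def)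
    moreover have "X \<in> measurable (\<F> A) borel" using that by (intro X_meas) (auto simp: A1_def)
    ultimately show ?thesis
      unfolding Y_def by (intro borel_measurable_add borel_measurable_scaleR borel_measurable_const measurable_b)
  qed
  have fresh: "SrcZ (2*m+2) \<notin> A2" "SrcZ (2*m+1) \<notin> A1" "SrcU j \<notin> A0"
      "SrcZ 0 \<notin> A0" "SrcZ 0 \<notin> A1" "SrcZ 0 \<notin> A2"
    by (auto simp: A2_def A1_def A0_def inputs_before_def j_def)
  have "(\<integral>\<^sup>+\<omega>. ennreal ((norm (coarse_chain b \<beta> h X0 Z U off (Suc m) \<omega>))^4) \<partial>M)
      = (\<integral>\<^sup>+\<omega>. ennreal (norm_quartic 0 0 ((Y \<omega> + c *\<^sub>R Z (2*m+1) \<omega>) + c *\<^sub>R Z (2*m+2) \<omega>)) \<partial>M)"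
    by (simp add: norm_quartic_def X_def Y_def c_def j_def Let_def algebra_simps)
  also have "\<dots> \<le> (\<integral>\<^sup>+\<omega>. ennreal (norm_quartic (8 * c^2 * n) (9 * c^4 * n^2) (Y \<omega> + c *\<^sub>R Z (2*m+1) \<omega>)) \<partial>M)"
  proof -
    have "Z (2*m+1) \<in> measurable (\<F> A2) borel" by (intro measurable_input_sigma_inputs) (simp add: A2_def)
    moreover have "Y \<in> measurable (\<F> A2) borel" by (rule Y_meas) (auto simp: A2_def)
    ultimately have "(\<lambda>\<omega>. Y \<omega> + c *\<^sub>R Z (2*m+1) \<omega>) \<in> measurable (\<F> A2) borel"
      by (intro borel_measurable_add borel_measurable_scaleR borel_measurable_const)
    from nn_integral_gaussian_step_le[OF fresh(1) _ fresh(6) this, of 0 0 c] show ?thesis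
      by (simp add: n_def)
  qed
  also have "\<dots> \<le> (\<integral>\<^sup>+\<omega>. ennreal (norm_quartic (16 * c^2 * n) (26 * c^4 * n^2) (Y \<omega>)) \<partial>M)"
  proof -
    have coeffs: "8 * c^2 * n + 8 * c^2 * real DIM('d) = 16 * c^2 * n"
      "9 * c^4 * n^2 + 8 * c^2 * n * c^2 * real DIM('d) + 9 * c^4 * (real DIM('d))^2 = 26 * c^4 * n^2"
      by (simp_all add: n_def power2_eq_square power4_eq_xxxx)
    have "(\<integral>\<^sup>+\<omega>. ennreal (norm_quartic (8 * c^2 * n) (9 * c^4 * n^2) (Y \<omega> + c *\<^sub>R Z (2*m+1) \<omega>)) \<partial>M)
      \<le> (\<integral>\<^sup>+\<omega>. ennreal (norm_quartic (8 * c^2 * n + 8 * c^2 * real DIM('d))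
            (9 * c^4 * n^2 + 8 * c^2 * n * c^2 * real DIM('d) + 9 * c^4 * (real DIM('d))^2) (Y \<omega>)) \<partial>M)"
      by (rule nn_integral_gaussian_step_le[OF fresh(2) _ fresh(5) Y_meas[OF order_refl]]) (simp_all add: n_def)
    then show ?thesis unfolding coeffs .
  qed
  also have "\<dots> = (\<integral>\<^sup>+\<omega>. ennreal (norm_quartic (16 * c^2 * n) (26 * c^4 * n^2)
                        ((X \<omega> + (2*h) *\<^sub>R a (X \<omega>)) + (2*h) *\<^sub>R (b (X \<omega>) (U j \<omega>) - a (X \<omega>)))) \<partial>M)"
    by (simp add: Y_def scaleR_diff_right)
  also have "\<dots> \<le> (\<integral>\<^sup>+\<omega>. ennreal (drift_quartic_bound (2*h) (16 * c^2 * n) (26 * c^4 * n^2)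
                        (X \<omega>) (X \<omega> + (2*h) *\<^sub>R a (X \<omega>))) \<partial>M)"
    using nn_integral_drift_step_le[where y = "\<lambda>x. x + (2*h) *\<^sub>R a x" and x = "\<lambda>x. x"
        and \<alpha> = "\<lambda>_. 16 * c^2 * n" and \<gamma> = "\<lambda>_. 26 * c^4 * n^2" and t = "2*h",
        OF fresh(3,4) X_meas[OF order_refl] _ measurable_ident_sets[OF refl] borel_measurable_const borel_measurable_const]
    by (simp add: n_def)
  finally show ?thesis by (simp add: X_def c_def n_def Let_def)
qed

text \<open>The Gaussian increments are shared by the two chains and cancel; the two drift variables are
  integrated out in reverse order, the later one conditionally on the earlier one.\<close>
lemma coarse_chain_diff_moment4_step:
  shows "(\<integral>\<^sup>+\<omega>. ennreal ((norm (coarse_chain b \<beta> h X0 Z U 1 (Suc m) \<omega> - coarse_chain b \<beta> h X0 Z U 0 (Suc m) \<omega>))^4) \<partial>M)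
    \<le> (\<integral>\<^sup>+\<omega>. ennreal (let p = coarse_chain b \<beta> h X0 Z U 1 m \<omega>; q = coarse_chain b \<beta> h X0 Z U 0 m \<omega> in
          drift_quartic_bound (-(2*h)) (8 * (2*h)^2 * (q2 * (1 + (norm p)^2))) (3 * (2*h)^4 * (q4 * (1 + (norm p)^4)))
            q (p - q + (2*h) *\<^sub>R (a p - a q))) \<partial>M)"
proof -
  define P Q' where "P = coarse_chain b \<beta> h X0 Z U 1 m" and "Q' = coarse_chain b \<beta> h X0 Z U 0 m"
  define V where "V = (\<lambda>\<omega>. P \<omega> - Q' \<omega> + (2*h) *\<^sub>R a (P \<omega>) - (2*h) *\<^sub>R b (Q' \<omega>) (U (2*m) \<omega>))"
  define A0 A1 where "A0 = inputs_before (2*m)" and "A1 = insert (SrcU (2*m)) A0"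
  have chain_meas: "coarse_chain b \<beta> h X0 Z U off m \<in> measurable (\<F> A) borel" if "A0 \<subseteq> A" "off \<le> 1" for A off
    by (rule measurable_coarse_chain[OF that(2)]) (use that in \<open>simp add: A0_def\<close>)
  have PQ_meas: "(\<lambda>\<omega>. (P \<omega>, Q' \<omega>)) \<in> measurable (\<F> A0) borel"
    unfolding P_def Q'_def borel_prod[symmetric] by (intro measurable_Pair chain_meas) auto
  have PV_meas: "(\<lambda>\<omega>. (P \<omega>, V \<omega>)) \<in> measurable (\<F> A1) borel"
  proof -
    have "U (2*m) \<in> measurable (\<F> A1) borel" by (intro measurable_input_sigma_inputs) (simp add: A1_def)
    moreover have "P \<in> measurable (\<F> A1) borel" "Q' \<in> measurable (\<F> A1) borel"
      unfolding P_def Q'_def by (auto intro!: chain_meas simp: A1_def)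
    ultimately show ?thesis
      unfolding V_def borel_prod[symmetric]
      by (intro measurable_Pair borel_measurable_add borel_measurable_diff borel_measurable_scaleR
          borel_measurable_const measurable_b measurable_compose[OF _ a_measurable])
  qed
  have fst_meas: "fst \<in> borel_measurable (borel :: ('d \<times> 'd) measure)"
    and snd_meas: "snd \<in> borel_measurable (borel :: ('d \<times> 'd) measure)"
    by (simp_all flip: borel_prod)
  note fst_meas [measurable] snd_meas [measurable]
  have fresh: "SrcU (2*m+1) \<notin> A1" "SrcU (2*m) \<notin> A0" "SrcZ 0 \<notin> A0" "SrcZ 0 \<notin> A1"
    by (auto simp: A1_def A0_def inputs_before_def)
  have "(\<integral>\<^sup>+\<omega>. ennreal ((norm (coarse_chain b \<beta> h X0 Z U 1 (Suc m) \<omega> - coarse_chain b \<beta> h X0 Z U 0 (Suc m) \<omega>))^4) \<partial>M)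
      = (\<integral>\<^sup>+\<omega>. ennreal (norm_quartic 0 0 (V \<omega> + (2*h) *\<^sub>R (b (P \<omega>) (U (2*m+1) \<omega>) - a (P \<omega>)))) \<partial>M)"
    by (simp add: norm_quartic_def V_def P_def Q'_def Let_def algebra_simps)
  also have "\<dots> \<le> (\<integral>\<^sup>+\<omega>. ennreal (drift_quartic_bound (2*h) 0 0 (P \<omega>) (V \<omega>)) \<partial>M)"
    using nn_integral_drift_step_le[where y = snd and x = fst and \<alpha> = "\<lambda>_. 0" and \<gamma> = "\<lambda>_. 0" and t = "2*h",
        OF fresh(1,4) PV_meas snd_meas fst_meas borel_measurable_const borel_measurable_const]
    by simp
  also have "\<dots> = (\<integral>\<^sup>+\<omega>. ennreal (norm_quartic (8 * (2*h)^2 * (q2 * (1 + (norm (P \<omega>))^2)))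
                         (3 * (2*h)^4 * (q4 * (1 + (norm (P \<omega>))^4)))
                         ((P \<omega> - Q' \<omega> + (2*h) *\<^sub>R (a (P \<omega>) - a (Q' \<omega>)))
                           + (-(2*h)) *\<^sub>R (b (Q' \<omega>) (U (2*m) \<omega>) - a (Q' \<omega>)))) \<partial>M)"
    by (simp add: drift_quartic_bound_def norm_quartic_def V_def algebra_simps)
  also have "\<dots> \<le> (\<integral>\<^sup>+\<omega>. ennreal (drift_quartic_bound (-(2*h)) (8 * (2*h)^2 * (q2 * (1 + (norm (P \<omega>))^2)))
                         (3 * (2*h)^4 * (q4 * (1 + (norm (P \<omega>))^4)))
                         (Q' \<omega>) (P \<omega> - Q' \<omega> + (2*h) *\<^sub>R (a (P \<omega>) - a (Q' \<omega>)))) \<partial>M)"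
    using nn_integral_drift_step_le[where y = "\<lambda>v. fst v - snd v + (2*h) *\<^sub>R (a (fst v) - a (snd v))" and x = snd
        and \<alpha> = "\<lambda>v. 8 * (2*h)^2 * (q2 * (1 + (norm (fst v))^2))"
        and \<gamma> = "\<lambda>v. 3 * (2*h)^4 * (q4 * (1 + (norm (fst v))^4))" and t = "-(2*h)",
        OF fresh(2,3) PQ_meas _ snd_meas]
      q2_nonneg q4_nonneg
    by simp measurable
  finally show ?thesis by (simp add: P_def Q'_def Let_def)
qed

end

definition diff_moment4_const :: "real \<Rightarrow> real \<Rightarrow> real" where
  "diff_moment4_const K \<kappa> = 384*\<kappa>^2/K + 48*\<kappa>^2 + 12*\<kappa>"

locale dissipative_coarse_coupling = coarse_coupling M X0 Z U Q a b q2 q4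
  for M :: "'a measure" and X0 :: "'a \<Rightarrow> 'd::euclidean_space" and Z and U :: "nat \<Rightarrow> 'a \<Rightarrow> 'u::euclidean_space"
    and Q a b q2 q4 +
  fixes L K :: real
  assumes lipschitz: "\<And>x y. norm (a x - a y) \<le> L * norm (x - y)"
    and dissipative: "\<And>x y. inner (x - y) (a x - a y) \<le> - K * (norm (x - y))\<^sup>2"
    and K_pos: "0 < K"
begin

lemma drift_quartic_bound_contraction:
  assumes h: "0 < h" "h \<le> 1" "2*h*K \<le> 1" "8*h*L^2 \<le> K" "160*h*\<kappa> \<le> K"
    and q: "q2 \<le> \<kappa>" "q4 \<le> \<kappa>"
  shows "drift_quartic_bound (2*h) (16 * (\<beta> * sqrt h)^2 * DIM('d)) (26 * (\<beta> * sqrt h)^4 * (real DIM('d))^2)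
           x (x + (2*h) *\<^sub>R a x)
       \<le> (1-h*K) * (norm x)^4
          + h * moment4_const K \<kappa> (4*(norm (a 0))^2/K + 8*(norm (a 0))^2) (\<beta>^2 * DIM('d))"
proof -
  define A r w where "A = (norm (x + (2*h) *\<^sub>R a x))^2" and "r = (norm x)^2" and "w = \<beta>^2 * DIM('d)"
  have euler: "A \<le> (1-2*h*K)*r + h*(4*(norm (a 0))^2/K + 8*(norm (a 0))^2)"
    unfolding A_def r_def by (rule norm_euler_step_le[OF lipschitz dissipative K_pos h(1,2,4)])
  have c: "16 * (\<beta> * sqrt h)^2 * DIM('d) = 16*h*w" "26 * (\<beta> * sqrt h)^4 * (real DIM('d))^2 = 26*(h*w)^2"
    using h(1) by (simp_all add: w_def power_mult_distrib power2_eq_square power4_eq_xxxx)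
  have "(norm (x + (2*h) *\<^sub>R a x))^4 = A^2" "(norm x)^4 = r^2"
    by (simp_all add: A_def r_def flip: power_mult)
  moreover have "0 \<le> 4*(norm (a 0))^2/K + 8*(norm (a 0))^2" using K_pos by simp
  moreover have "0 \<le> \<kappa>" using q2_nonneg q(1) by simp
  ultimately show ?thesis
    using moment4_recursion_le[OF _ _ euler h(1-3,5) K_pos _ _ q2_nonneg q(1) q4_nonneg q(2), of "w"]
    by (simp add: drift_quartic_bound_def c A_def r_def w_def)
qed

lemma drift_quartic_bound_diff_contraction:
  fixes h e \<kappa> :: real and p q :: 'd
  defines "\<gamma> \<equiv> h^3 * e^2 * diff_moment4_const K \<kappa>"
  assumes h: "0 < h" "h \<le> 1" "2*h*K \<le> 1" "8*h*L^2 \<le> K"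
    and \<kappa>: "0 \<le> \<kappa>" and e: "0 \<le> e" and q: "q2 \<le> \<kappa>*e/2" "q4 \<le> \<kappa>*e^2/4"
  shows "drift_quartic_bound (-(2*h)) (8 * (2*h)^2 * (q2 * (1 + (norm p)^2))) (3 * (2*h)^4 * (q4 * (1 + (norm p)^4)))
           q (p - q + (2*h) *\<^sub>R (a p - a q))
       \<le> (1-h*K) * (norm (p - q))^4 + \<gamma> * (norm p)^4 + \<gamma> * (norm q)^4 + 2*\<gamma>"
    (is "?lhs \<le> _")
proof -
  define A where "A = (norm (p - q + (2*h) *\<^sub>R (a p - a q)))^2"
  have euler: "A \<le> (1-2*h*K)*(norm (p - q))^2"
    unfolding A_def by (rule norm_euler_step_diff_le[OF lipschitz dissipative K_pos h(1,4)])
  define pp P2 Q2 where "pp = (norm (p - q))^2" and "P2 = (norm p)^2" and "Q2 = (norm q)^2"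
  have pow4: "(t::real)^4 = (t^2)^2" for t by (simp flip: power_mult)
  have "(A^2 + 8*(-(2*h))^2*A*(q2*(1+Q2)) + 3*(-(2*h))^4*(q4*(1+Q2^2)))
          + (8*(2*h)^2*(q2*(1+P2)))*(A + (-(2*h))^2*(q2*(1+Q2))) + 3*(2*h)^4*(q4*(1+P2^2))
       \<le> (1-h*K)*pp^2 + h^3*e^2*((384*\<kappa>^2/K + 48*\<kappa>^2 + 12*\<kappa>)*(2+P2^2+Q2^2))"
    by (rule diff_moment4_recursion_le[OF _ _ euler[folded pp_def] h(1-3) K_pos _ _ \<kappa> e q2_nonneg q(1) q4_nonneg q(2)])
       (simp_all add: A_def pp_def P2_def Q2_def)
  moreover have "(1-h*K)*pp^2 + h^3*e^2*((384*\<kappa>^2/K + 48*\<kappa>^2 + 12*\<kappa>)*(2+P2^2+Q2^2))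
      = (1-h*K) * (norm (p - q))^4 + \<gamma> * (norm p)^4 + \<gamma> * (norm q)^4 + 2*\<gamma>"
    unfolding \<gamma>_def diff_moment4_const_def pp_def P2_def Q2_def pow4[of "norm (p - q)"] pow4[of "norm p"]
      pow4[of "norm q"]
    by (simp add: algebra_simps add_divide_distrib)
  ultimately show ?thesis
    unfolding drift_quartic_bound_def A_def P2_def Q2_def pow4[of "norm (p - q + (2*h) *\<^sub>R (a p - a q))"]
      pow4[of "norm p"] pow4[of "norm q"]
    by simp
qed

lemma coarse_chain_moment4_le:
  fixes \<beta> h \<kappa> B :: real
  assumes h: "0 < h" "h \<le> 1" "2*h*K \<le> 1" "8*h*L^2 \<le> K" "160*h*\<kappa> \<le> K"
    and q: "q2 \<le> \<kappa>" "q4 \<le> \<kappa>" and off: "off \<le> 1"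
    and init: "(\<integral>\<^sup>+\<omega>. ennreal ((norm (X0 \<omega>))^4) \<partial>M) \<le> ennreal B"
    and B: "moment4_const K \<kappa> (4*(norm (a 0))^2/K + 8*(norm (a 0))^2) (\<beta>^2 * DIM('d)) \<le> K * B"
  shows "(\<integral>\<^sup>+\<omega>. ennreal ((norm (coarse_chain b \<beta> h X0 Z U off m \<omega>))^4) \<partial>M) \<le> ennreal B"
proof (induction m)
  case 0
  then show ?case using init by simp
next
  case (Suc m)
  define C where "C = moment4_const K \<kappa> (4*(norm (a 0))^2/K + 8*(norm (a 0))^2) (\<beta>^2 * DIM('d))"
  let ?X = "coarse_chain b \<beta> h X0 Z U off m"
  have C: "0 \<le> C" unfolding C_def
    using K_pos q2_nonneg q(1) by (intro moment4_const_nonneg) auto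
  have "(\<integral>\<^sup>+\<omega>. ennreal ((norm (coarse_chain b \<beta> h X0 Z U off (Suc m) \<omega>))^4) \<partial>M)
      \<le> (\<integral>\<^sup>+\<omega>. ennreal (let x = ?X \<omega> in
          drift_quartic_bound (2*h) (16 * (\<beta> * sqrt h)^2 * DIM('d)) (26 * (\<beta> * sqrt h)^4 * (real DIM('d))^2)
            x (x + (2*h) *\<^sub>R a x)) \<partial>M)"
    by (rule coarse_chain_moment4_step[OF off])
  also have "\<dots> \<le> (\<integral>\<^sup>+\<omega>. ennreal ((1-h*K) * (norm (?X \<omega>))^4 + 0 * (norm (?X \<omega>))^4 + 0 * (norm (?X \<omega>))^4 + h*C) \<partial>M)"
    unfolding Let_def C_def
    by (intro nn_integral_mono ennreal_leI) (simp add: drift_quartic_bound_contraction[OF h q])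
  also have "\<dots> \<le> ennreal ((1-h*K) * B + 0 * B + 0 * B + h*C)"
  proof -
    have "0 \<le> K * B" using C B by (simp add: C_def)
    then have "0 \<le> B" using K_pos by (simp add: zero_le_mult_iff)
    then show ?thesis
      using h Suc.IH off C by (intro nn_integral_affine_le[OF prob_space_axioms]) auto
  qed
  also have "\<dots> \<le> ennreal B"
  proof (intro ennreal_leI)
    have "h*C \<le> h*(K*B)" using B h by (intro mult_left_mono) (auto simp: C_def)
    then show "(1-h*K) * B + 0 * B + 0 * B + h*C \<le> B" by (simp add: algebra_simps)
  qed
  finally show ?case .
qed

lemma coarse_chain_diff_moment4_le:
  fixes \<beta> h \<kappa> e B :: real
  assumes h: "0 < h" "h \<le> 1" "2*h*K \<le> 1" "8*h*L^2 \<le> K"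
    and \<kappa>: "0 \<le> \<kappa>" and e: "0 \<le> e" and q: "q2 \<le> \<kappa>*e/2" "q4 \<le> \<kappa>*e^2/4"
    and moments: "\<And>off m. off \<le> 1 \<Longrightarrow> (\<integral>\<^sup>+\<omega>. ennreal ((norm (coarse_chain b \<beta> h X0 Z U off m \<omega>))^4) \<partial>M) \<le> ennreal B"
    and B: "0 \<le> B"
  shows "(\<integral>\<^sup>+\<omega>. ennreal ((norm (coarse_chain b \<beta> h X0 Z U 1 m \<omega> - coarse_chain b \<beta> h X0 Z U 0 m \<omega>))^4) \<partial>M)
       \<le> ennreal (diff_moment4_const K \<kappa> * (2 + 2*B) * h^2 * e^2 / K)"
proof (induction m)
  case 0
  then show ?case by simp
next
  case (Suc m)
  define \<gamma> where "\<gamma> = h^3 * e^2 * diff_moment4_const K \<kappa>"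
  define D where "D = diff_moment4_const K \<kappa> * (2 + 2*B) * h^2 * e^2 / K"
  let ?P = "coarse_chain b \<beta> h X0 Z U 1 m" and ?Q = "coarse_chain b \<beta> h X0 Z U 0 m"
  have \<gamma>: "0 \<le> \<gamma>" using h K_pos \<kappa> by (simp add: \<gamma>_def diff_moment4_const_def)
  have "(\<integral>\<^sup>+\<omega>. ennreal ((norm (coarse_chain b \<beta> h X0 Z U 1 (Suc m) \<omega> - coarse_chain b \<beta> h X0 Z U 0 (Suc m) \<omega>))^4) \<partial>M)
      \<le> (\<integral>\<^sup>+\<omega>. ennreal (let p = ?P \<omega>; q = ?Q \<omega> in
          drift_quartic_bound (-(2*h)) (8 * (2*h)^2 * (q2 * (1 + (norm p)^2))) (3 * (2*h)^4 * (q4 * (1 + (norm p)^4)))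
            q (p - q + (2*h) *\<^sub>R (a p - a q))) \<partial>M)"
    by (rule coarse_chain_diff_moment4_step)
  also have "\<dots> \<le> (\<integral>\<^sup>+\<omega>. ennreal ((1-h*K) * (norm (?P \<omega> - ?Q \<omega>))^4 + \<gamma> * (norm (?P \<omega>))^4
                                  + \<gamma> * (norm (?Q \<omega>))^4 + 2*\<gamma>) \<partial>M)"
    unfolding Let_def \<gamma>_def
    by (intro nn_integral_mono ennreal_leI drift_quartic_bound_diff_contraction[OF h \<kappa> e q])
  also have "\<dots> \<le> ennreal ((1-h*K) * D + \<gamma> * B + \<gamma> * B + 2*\<gamma>)"
    using h K_pos \<gamma> B moments[of 1 m] moments[of 0 m] Suc.IH[folded D_def] \<kappa>
    by (intro nn_integral_affine_le[OF prob_space_axioms]) (auto simp: D_def diff_moment4_const_def)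
  also have "(1-h*K) * D + \<gamma> * B + \<gamma> * B + 2*\<gamma> = D"
    using K_pos by (simp add: D_def \<gamma>_def field_simps power2_eq_square power3_eq_cube)
  finally show ?case by (simp add: D_def)
qed

lemma coarse_chain_diff_moment4_bound:
  fixes \<beta> h \<kappa> e B :: real
  assumes h: "0 < h" "h \<le> 1" "2*h*K \<le> 1" "8*h*L^2 \<le> K" "160*h*\<kappa> \<le> K"
    and \<kappa>: "0 \<le> \<kappa>" and e: "0 \<le> e" "e \<le> 1" and q: "q2 \<le> \<kappa>*e/2" "q4 \<le> \<kappa>*e^2/4"
    and init: "(\<integral>\<^sup>+\<omega>. ennreal ((norm (X0 \<omega>))^4) \<partial>M) \<le> ennreal B"
    and B: "moment4_const K \<kappa> (4*(norm (a 0))^2/K + 8*(norm (a 0))^2) (\<beta>^2 * DIM('d)) \<le> K * B"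
  shows "(\<integral>\<^sup>+\<omega>. ennreal ((norm (coarse_chain b \<beta> h X0 Z U 1 m \<omega> - coarse_chain b \<beta> h X0 Z U 0 m \<omega>))^4) \<partial>M)
       \<le> ennreal (diff_moment4_const K \<kappa> * (2 + 2*B) * h^2 * e^2 / K)"
proof -
  have "\<kappa>*e \<le> \<kappa>" "\<kappa>*e^2 \<le> \<kappa>"
    using mult_left_mono[OF e(2) \<kappa>] mult_left_mono[OF power_le_one[OF e, of 2] \<kappa>] by simp_all
  then have q': "q2 \<le> \<kappa>" "q4 \<le> \<kappa>" using q \<kappa> by linarith+
  have "0 \<le> K * B"
    using B K_pos \<kappa> moment4_const_nonneg[of K \<kappa> "4*(norm (a 0))^2/K + 8*(norm (a 0))^2" "\<beta>^2 * DIM('d)"]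
    by simp
  then have "0 \<le> B" using K_pos by (simp add: zero_le_mult_iff)
  then show ?thesis
    using coarse_chain_diff_moment4_le[OF h(1-4) \<kappa> e(1) q coarse_chain_moment4_le[OF h q' _ init B]] by simp
qed

end

lemma step_size_conditions:
  fixes h K L \<kappa> :: real
  assumes "0 < K" "1 \<le> \<kappa>" "0 < h" "h < min 1 (min (1/(2*K)) (min (K/(8*L^2+1)) (K/(160*\<kappa>))))"
  shows "h \<le> 1" "2*h*K \<le> 1" "8*h*L^2 \<le> K" "160*h*\<kappa> \<le> K"
proof -
  have "h * (8*L^2+1) < K"
    using assms(4) pos_less_divide_eq[of "8*L^2+1" h K] by (simp add: add_nonneg_pos)
  then show "8*h*L^2 \<le> K" using assms(3) by (simp add: algebra_simps)
qed (use assms in \<open>simp_all add: field_simps\<close>)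

lemma nn_integral_le_ennreal_mono:
  "(\<integral>\<^sup>+x. f x \<partial>N) \<le> ennreal (\<sigma> * c) \<Longrightarrow> \<sigma> \<le> q \<Longrightarrow> 0 \<le> c \<Longrightarrow> (\<integral>\<^sup>+x. f x \<partial>N) \<le> ennreal (q * c)"
  by (erule order_trans) (intro ennreal_leI mult_right_mono)

lemma ennreal_le_max_enn2real:
  assumes "x < \<infinity>"
  shows "x \<le> ennreal (max (enn2real x) c)"
proof -
  have "x = ennreal (enn2real x)" using assms by (simp add: ennreal_enn2real)
  also have "\<dots> \<le> ennreal (max (enn2real x) c)" by (rule ennreal_leI) simp
  finally show ?thesis .
qed

theorem lemma5:
  fixes a :: "'d::euclidean_space \<Rightarrow> 'd"
    and b :: "'d \<Rightarrow> 'u::euclidean_space \<Rightarrow> 'd"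
    and \<mu> :: "nat \<Rightarrow> 'u measure"
    and \<beta> L K C\<^sub>a\<^sub>1 C\<^sub>a\<^sub>2 \<kappa> L\<^sub>0 :: real
    and \<sigma>2 \<sigma>4 :: "nat \<Rightarrow> real"
    and M :: "'a measure"
    and X0 :: "'a \<Rightarrow> 'd"
    and Z :: "nat \<Rightarrow> 'a \<Rightarrow> 'd"
    and U :: "nat \<Rightarrow> nat \<Rightarrow> 'a \<Rightarrow> 'u"
  assumes beta: "\<beta> \<ge> 0"
    and a_meas: "a \<in> borel_measurable borel"
    and b_meas: "(\<lambda>(x, u). b x u) \<in> borel_measurable (borel \<Otimes>\<^sub>M borel)"
    and mu_prob: "\<And>s. s \<ge> 1 \<Longrightarrow> prob_space (\<mu> s)"
    and mu_sets: "\<And>s. s \<ge> 1 \<Longrightarrow> sets (\<mu> s) = sets borel"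
    and unbiased: "\<And>s x. s \<ge> 1 \<Longrightarrow> integrable (\<mu> s) (b x) \<and> (\<integral>u. b x u \<partial>\<mu> s) = a x"
    \<comment> \<open>(A1)\<close>
    and A1_lip: "\<And>x y. norm (a x - a y) \<le> L * norm (x - y)"
    and A1_K: "K > 0"
    and A1_diss: "\<And>x y. inner (x - y) (a x - a y) \<le> - K * (norm (x - y))\<^sup>2"
    and A1_C2: "\<exists>a' :: 'd \<Rightarrow> 'd \<Rightarrow>\<^sub>L 'd. \<exists>a'' :: 'd \<Rightarrow> 'd \<Rightarrow>\<^sub>L ('d \<Rightarrow>\<^sub>L 'd).
                  (\<forall>x. (a has_derivative blinfun_apply (a' x)) (at x))
                \<and> (\<forall>x. (a' has_derivative blinfun_apply (a'' x)) (at x))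
                \<and> continuous_on UNIV a''
                \<and> (\<forall>x. \<forall>i\<in>Basis. norm (blinfun_apply (a' x) i) \<le> C\<^sub>a\<^sub>1)
                \<and> (\<forall>x. \<forall>i\<in>Basis. \<forall>j\<in>Basis. norm (blinfun_apply (blinfun_apply (a'' x) i) j) \<le> C\<^sub>a\<^sub>2)"
    \<comment> \<open>(A3)\<close>
    and A3: "\<And>s x. s \<ge> 1 \<Longrightarrow>
               (\<integral>\<^sup>+u. ennreal ((norm (b x u - a x))^2) \<partial>\<mu> s) \<le> ennreal (\<sigma>2 s * (1 + (norm x)^2))"
    and A3_rate: "\<And>s. s \<ge> 1 \<Longrightarrow> \<sigma>2 s \<le> \<kappa> / real s"
    \<comment> \<open>(A4)\<close>
    and A4: "\<And>s x. s \<ge> 1 \<Longrightarrow>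
               (\<integral>\<^sup>+u. ennreal ((norm (b x u - a x))^4) \<partial>\<mu> s) \<le> ennreal (\<sigma>4 s * (1 + (norm x)^4))"
    and A4_rate: "\<And>s. s \<ge> 1 \<Longrightarrow> \<sigma>4 s \<le> \<kappa> / (real s)^2"
    \<comment> \<open>(A7)\<close>
    and A7: "\<And>x. (norm (a x))^4 \<le> L\<^sub>0 * (1 + (norm x)^4)"
    \<comment> \<open>random inputs of the coupled chains (U s k = U^f_k at level 2s)\<close>
    and M_prob: "prob_space M"
    and X0_rv: "X0 \<in> borel_measurable M"
    and X0_moment: "(\<integral>\<^sup>+\<omega>. ennreal ((norm (X0 \<omega>))^4) \<partial>M) < \<infinity>"
    and Z_rv: "\<And>k. Z k \<in> borel_measurable M"
    and Z_law: "\<And>k. k \<ge> 1 \<Longrightarrow> distr M borel (Z k) = std_normal_vec"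
    and U_rv: "\<And>s k. U s k \<in> borel_measurable M"
    and U_law: "\<And>s k. s \<ge> 1 \<Longrightarrow> distr M borel (U s k) = \<mu> (2 * s)"
    and indep: "\<And>s. s \<ge> 1 \<Longrightarrow> inputs_indep M X0 Z (U s)"
  shows "\<exists>h0 > 0. \<exists>C > 0. \<forall>s h k. s \<ge> 1 \<longrightarrow> 0 < h \<longrightarrow> h < h0 \<longrightarrow> even k \<longrightarrow> k \<ge> 2 \<longrightarrow>
           (\<integral>\<^sup>+\<omega>. ennreal ((norm (coarse_chain b \<beta> h X0 Z (U s) 1 (k div 2) \<omega>
                                   - coarse_chain b \<beta> h X0 Z (U s) 0 (k div 2) \<omega>))^4) \<partial>M)
             \<le> ennreal (C * h^2 / (real s)^2)"
proof -
  define \<kappa>\<^sub>1 where "\<kappa>\<^sub>1 = max \<kappa> 1"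
  define C where "C = moment4_const K \<kappa>\<^sub>1 (4*(norm (a 0))^2/K + 8*(norm (a 0))^2) (\<beta>^2 * DIM('d))"
  define B where "B = max (enn2real (\<integral>\<^sup>+\<omega>. ennreal ((norm (X0 \<omega>))^4) \<partial>M)) (C/K)"
  define h0 where "h0 = min 1 (min (1/(2*K)) (min (K/(8*L^2+1)) (K/(160*\<kappa>\<^sub>1))))"
  define C' where "C' = diff_moment4_const K \<kappa>\<^sub>1 * (2 + 2*B) / K"
  have \<kappa>\<^sub>1: "1 \<le> \<kappa>\<^sub>1" by (simp add: \<kappa>\<^sub>1_def)
  have "C/K \<le> B" "0 \<le> B" by (simp_all add: B_def le_max_iff_disj)
  then have B: "C \<le> K * B" "0 \<le> B" using A1_K by (simp_all add: field_simps)
  have "(\<integral>\<^sup>+\<omega>. ennreal ((norm (coarse_chain b \<beta> h X0 Z (U s) 1 m \<omega> - coarse_chain b \<beta> h X0 Z (U s) 0 m \<omega>))^4) \<partial>M)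
       \<le> ennreal (C' * h^2 / (real s)^2)" if s: "1 \<le> s" and h: "0 < h" "h < h0" for s h m
  proof -
    have s2: "1 \<le> 2 * s" using s by simp
    have rate: "\<sigma>2 (2 * s) \<le> \<kappa>\<^sub>1 * (1/real s)/2" "\<sigma>4 (2 * s) \<le> \<kappa>\<^sub>1 * (1/real s)^2/4"
      using A3_rate[OF s2] A4_rate[OF s2] order_trans[OF _ divide_right_mono[of \<kappa> \<kappa>\<^sub>1]]
      by (auto simp: \<kappa>\<^sub>1_def power2_eq_square)
    have "dissipative_coarse_coupling M X0 Z (U s) (\<mu> (2 * s)) a b (\<kappa>\<^sub>1 * (1/real s)/2) (\<kappa>\<^sub>1 * (1/real s)^2/4) L K"
      by (intro dissipative_coarse_coupling.intro coarse_coupling.intro chain_inputs.intro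
          chain_inputs_axioms.intro coarse_coupling_axioms.intro dissipative_coarse_coupling_axioms.intro
          M_prob X0_rv Z_rv U_rv indep[OF s] Z_law U_law[OF s] mu_prob[OF s2] mu_sets[OF s2] a_meas b_meas
          unbiased[OF s2] nn_integral_le_ennreal_mono[OF A3[OF s2] rate(1)]
          nn_integral_le_ennreal_mono[OF A4[OF s2] rate(2)] A1_lip A1_diss A1_K)
         (use \<kappa>\<^sub>1 in auto)
    from dissipative_coarse_coupling.coarse_chain_diff_moment4_bound[OF this h(1)
        step_size_conditions[OF A1_K \<kappa>\<^sub>1 h(1) h(2)[unfolded h0_def]] _ _ _ order_refl order_refl
        ennreal_le_max_enn2real[OF X0_moment] B(1)[unfolded C_def B_def]]
    show ?thesis using \<kappa>\<^sub>1 s by (simp add: C'_def B_def C_def field_simps power2_eq_square)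
  qed
  moreover have "0 < h0" unfolding h0_def using A1_K \<kappa>\<^sub>1 by (auto intro!: divide_pos_pos add_nonneg_pos)
  moreover have "0 < C'" using A1_K \<kappa>\<^sub>1 B(2) by (simp add: C'_def diff_moment4_const_def add_nonneg_pos)
  ultimately show ?thesis by blast
qed

end
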